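(* Let $k$ be an algebraically closed field of characteristic $p>0$ and $H$ a finite-dimensional cocommutative connected Hopf algebra over $k$. Then every term $\Gamma^n(H)$, $n\ge0$, of the upper power series of $H$ is a normal Hopf subalgebra of $H$.
   Context: Connected: the coradical (sum of simple subcoalgebras) is one-dimensional. Coradical filtration: $H_n=\Delta^{-1}(H\otimes H_{n-1}+H_0\otimes H)$. Upper power series: $\Gamma^0(H)=k$, and for $n\ge1$ $\Gamma^n(H)$ is the subalgebra of $H$ generated by $H_{p^{n-1}}$. A Hopf subalgebra $K\subseteq H$ is normal if $\sum S(h_1)kh_2\in K$ and $\sum h_1kS(h_2)\in K$ for all $k\in K,h\in H$. *)

theory Defs
  imports "HOL-Computational_Algebra.Polynomial"
begin

(* A finite-dimensional Hopf algebra over a field 'k, presented by structure constants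
   with respect to a basis e_0, ..., e_{d-1}.  Elements of H are coefficient vectors
   nat => 'k supported on {0..<d}; elements of H (x) H are coefficient arrays
   nat x nat => 'k supported on {0..<d} x {0..<d}.
   mu i j l   : coefficient of e_l in e_i e_j
   unit       : the unit element 1_H
   delta l i j: coefficient of e_i (x) e_j in Delta(e_l)
   eps l      : counit of e_l
   anti l j   : coefficient of e_j in S(e_l)                                   *)
record 'k hopf =
  dim   :: nat
  mu    :: "nat \<Rightarrow> nat \<Rightarrow> nat \<Rightarrow> 'k"
  unit  :: "nat \<Rightarrow> 'k"
  delta :: "nat \<Rightarrow> nat \<Rightarrow> nat \<Rightarrow> 'k"
  eps   :: "nat \<Rightarrow> 'k"
  anti  :: "nat \<Rightarrow> nat \<Rightarrow> 'k"

definition zv :: "'a \<Rightarrow> 'k::field" where "zv = (\<lambda>_. 0)"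
definition addv :: "('a \<Rightarrow> 'k::field) \<Rightarrow> ('a \<Rightarrow> 'k) \<Rightarrow> 'a \<Rightarrow> 'k"
  where "addv v w = (\<lambda>x. v x + w x)"
definition smul :: "'k::field \<Rightarrow> ('a \<Rightarrow> 'k) \<Rightarrow> 'a \<Rightarrow> 'k"
  where "smul c v = (\<lambda>x. c * v x)"
definition vsum :: "('i \<Rightarrow> 'a \<Rightarrow> 'k::field) \<Rightarrow> 'i set \<Rightarrow> 'a \<Rightarrow> 'k"
  where "vsum f I = (\<lambda>x. \<Sum>i\<in>I. f i x)"

inductive_set kspan :: "('a \<Rightarrow> 'k::field) set \<Rightarrow> ('a \<Rightarrow> 'k) set" for S where
  kspan_zero: "zv \<in> kspan S"
| kspan_base: "v \<in> S \<Longrightarrow> v \<in> kspan S"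
| kspan_add: "v \<in> kspan S \<Longrightarrow> w \<in> kspan S \<Longrightarrow> addv v w \<in> kspan S"
| kspan_smul: "v \<in> kspan S \<Longrightarrow> smul c v \<in> kspan S"

definition vecs :: "'k::field hopf \<Rightarrow> (nat \<Rightarrow> 'k) set"
  where "vecs H = {v. \<forall>i\<ge>dim H. v i = 0}"

definition bvec :: "nat \<Rightarrow> nat \<Rightarrow> 'k::field"
  where "bvec i = (\<lambda>j. if j = i then 1 else 0)"

definition tens_prod :: "(nat \<Rightarrow> 'k::field) \<Rightarrow> (nat \<Rightarrow> 'k) \<Rightarrow> nat \<times> nat \<Rightarrow> 'k"
  where "tens_prod v w = (\<lambda>(i, j). v i * w j)"

definition hmult :: "'k::field hopf \<Rightarrow> (nat \<Rightarrow> 'k) \<Rightarrow> (nat \<Rightarrow> 'k) \<Rightarrow> nat \<Rightarrow> 'k" where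
  "hmult H v w = (\<lambda>l. if l < dim H then
      (\<Sum>i<dim H. \<Sum>j<dim H. v i * w j * mu H i j l) else 0)"

definition hcomult :: "'k::field hopf \<Rightarrow> (nat \<Rightarrow> 'k) \<Rightarrow> nat \<times> nat \<Rightarrow> 'k" where
  "hcomult H v = (\<lambda>(i, j). if i < dim H \<and> j < dim H then
      (\<Sum>l<dim H. v l * delta H l i j) else 0)"

definition hcounit :: "'k::field hopf \<Rightarrow> (nat \<Rightarrow> 'k) \<Rightarrow> 'k" where
  "hcounit H v = (\<Sum>l<dim H. v l * eps H l)"

definition hanti :: "'k::field hopf \<Rightarrow> (nat \<Rightarrow> 'k) \<Rightarrow> nat \<Rightarrow> 'k" where
  "hanti H v = (\<lambda>j. if j < dim H then (\<Sum>l<dim H. v l * anti H l j) else 0)"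

(* multiplication on H (x) H:  (a (x) b)(c (x) d) = ac (x) bd *)
definition tmult :: "'k::field hopf \<Rightarrow> (nat \<times> nat \<Rightarrow> 'k) \<Rightarrow> (nat \<times> nat \<Rightarrow> 'k) \<Rightarrow> nat \<times> nat \<Rightarrow> 'k" where
  "tmult H s t = (\<lambda>(a, b). \<Sum>i1<dim H. \<Sum>j1<dim H. \<Sum>i2<dim H. \<Sum>j2<dim H.
       s (i1, j1) * t (i2, j2) * hmult H (bvec i1) (bvec i2) a * hmult H (bvec j1) (bvec j2) b)"

definition hopf_algebra :: "'k::field hopf \<Rightarrow> bool" where
  "hopf_algebra H \<longleftrightarrow>
     unit H \<in> vecs H
   \<comment> \<open>associativity and unit\<close>
   \<and> (\<forall>v\<in>vecs H. \<forall>w\<in>vecs H. \<forall>x\<in>vecs H. hmult H (hmult H v w) x = hmult H v (hmult H w x))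
   \<and> (\<forall>v\<in>vecs H. hmult H (unit H) v = v \<and> hmult H v (unit H) = v)
   \<comment> \<open>coassociativity: (Delta (x) id) Delta = (id (x) Delta) Delta\<close>
   \<and> (\<forall>v\<in>vecs H.
        (\<lambda>(a, b, c). \<Sum>i<dim H. hcomult H v (i, c) * hcomult H (bvec i) (a, b))
      = (\<lambda>(a, b, c). \<Sum>j<dim H. hcomult H v (a, j) * hcomult H (bvec j) (b, c)))
   \<comment> \<open>counit: (eps (x) id) Delta = id = (id (x) eps) Delta\<close>
   \<and> (\<forall>v\<in>vecs H.
        (\<lambda>a. \<Sum>i<dim H. hcounit H (bvec i) * hcomult H v (i, a)) = v
      \<and> (\<lambda>a. \<Sum>j<dim H. hcomult H v (a, j) * hcounit H (bvec j)) = v)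
   \<comment> \<open>Delta and eps are algebra maps\<close>
   \<and> (\<forall>v\<in>vecs H. \<forall>w\<in>vecs H.
        hcomult H (hmult H v w) = tmult H (hcomult H v) (hcomult H w))
   \<and> hcomult H (unit H) = tens_prod (unit H) (unit H)
   \<and> (\<forall>v\<in>vecs H. \<forall>w\<in>vecs H. hcounit H (hmult H v w) = hcounit H v * hcounit H w)
   \<and> hcounit H (unit H) = 1
   \<comment> \<open>antipode: m (S (x) id) Delta = u eps = m (id (x) S) Delta\<close>
   \<and> (\<forall>v\<in>vecs H.
        vsum (\<lambda>(i, j). smul (hcomult H v (i, j)) (hmult H (hanti H (bvec i)) (bvec j)))
             ({..<dim H} \<times> {..<dim H}) = smul (hcounit H v) (unit H)
      \<and> vsum (\<lambda>(i, j). smul (hcomult H v (i, j)) (hmult H (bvec i) (hanti H (bvec j))))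
             ({..<dim H} \<times> {..<dim H}) = smul (hcounit H v) (unit H))"

definition cocommutative :: "'k::field hopf \<Rightarrow> bool" where
  "cocommutative H \<longleftrightarrow> (\<forall>v\<in>vecs H. \<forall>i j. hcomult H v (i, j) = hcomult H v (j, i))"

definition subspace_of :: "'k::field hopf \<Rightarrow> (nat \<Rightarrow> 'k) set \<Rightarrow> bool" where
  "subspace_of H W \<longleftrightarrow> W \<subseteq> vecs H \<and> zv \<in> W
     \<and> (\<forall>v\<in>W. \<forall>w\<in>W. addv v w \<in> W) \<and> (\<forall>c. \<forall>v\<in>W. smul c v \<in> W)"

definition tens_sp :: "(nat \<Rightarrow> 'k::field) set \<Rightarrow> (nat \<Rightarrow> 'k) set \<Rightarrow> (nat \<times> nat \<Rightarrow> 'k) set" where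
  "tens_sp A B = kspan {tens_prod a b | a b. a \<in> A \<and> b \<in> B}"

definition sum_sp :: "('a \<Rightarrow> 'k::field) set \<Rightarrow> ('a \<Rightarrow> 'k) set \<Rightarrow> ('a \<Rightarrow> 'k) set" where
  "sum_sp A B = {addv a b | a b. a \<in> A \<and> b \<in> B}"

definition subcoalgebra :: "'k::field hopf \<Rightarrow> (nat \<Rightarrow> 'k) set \<Rightarrow> bool" where
  "subcoalgebra H W \<longleftrightarrow> subspace_of H W \<and> hcomult H ` W \<subseteq> tens_sp W W"

definition simple_subcoalgebra :: "'k::field hopf \<Rightarrow> (nat \<Rightarrow> 'k) set \<Rightarrow> bool" where
  "simple_subcoalgebra H W \<longleftrightarrow> subcoalgebra H W \<and> W \<noteq> {zv}
     \<and> (\<forall>W'. subcoalgebra H W' \<and> W' \<subseteq> W \<longrightarrow> W' = {zv} \<or> W' = W)"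

definition coradical :: "'k::field hopf \<Rightarrow> (nat \<Rightarrow> 'k) set" where
  "coradical H = kspan (\<Union>{W. simple_subcoalgebra H W})"

definition connected_hopf :: "'k::field hopf \<Rightarrow> bool" where
  "connected_hopf H \<longleftrightarrow> (\<exists>v. v \<noteq> zv \<and> coradical H = {smul c v | c. True})"

fun corad_filt :: "'k::field hopf \<Rightarrow> nat \<Rightarrow> (nat \<Rightarrow> 'k) set" where
  "corad_filt H 0 = coradical H"
| "corad_filt H (Suc n) = {v \<in> vecs H. hcomult H v \<in>
      sum_sp (tens_sp (vecs H) (corad_filt H n)) (tens_sp (coradical H) (vecs H))}"

definition subalgebra_of :: "'k::field hopf \<Rightarrow> (nat \<Rightarrow> 'k) set \<Rightarrow> bool" where
  "subalgebra_of H A \<longleftrightarrow> subspace_of H A \<and> unit H \<in> A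
     \<and> (\<forall>v\<in>A. \<forall>w\<in>A. hmult H v w \<in> A)"

definition gen_subalg :: "'k::field hopf \<Rightarrow> (nat \<Rightarrow> 'k) set \<Rightarrow> (nat \<Rightarrow> 'k) set" where
  "gen_subalg H S = \<Inter>{A. subalgebra_of H A \<and> S \<subseteq> A}"

definition upper_power :: "'k::field hopf \<Rightarrow> nat \<Rightarrow> (nat \<Rightarrow> 'k) set" where
  "upper_power H n = (if n = 0 then kspan {unit H}
      else gen_subalg H (corad_filt H (CHAR('k) ^ (n - 1))))"

definition hopf_subalgebra :: "'k::field hopf \<Rightarrow> (nat \<Rightarrow> 'k) set \<Rightarrow> bool" where
  "hopf_subalgebra H K \<longleftrightarrow> subalgebra_of H K \<and> hcomult H ` K \<subseteq> tens_sp K K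
     \<and> hanti H ` K \<subseteq> K"

definition normal_hopf_subalgebra :: "'k::field hopf \<Rightarrow> (nat \<Rightarrow> 'k) set \<Rightarrow> bool" where
  "normal_hopf_subalgebra H K \<longleftrightarrow> hopf_subalgebra H K
     \<and> (\<forall>k\<in>K. \<forall>h\<in>vecs H.
          vsum (\<lambda>(i, j). smul (hcomult H h (i, j)) (hmult H (hanti H (bvec i)) (hmult H k (bvec j))))
               ({..<dim H} \<times> {..<dim H}) \<in> K
        \<and> vsum (\<lambda>(i, j). smul (hcomult H h (i, j)) (hmult H (bvec i) (hmult H k (hanti H (bvec j)))))
               ({..<dim H} \<times> {..<dim H}) \<in> K)"

end

theory Submission
  imports Defs
begin

text \<open>Every term \<open>H_n\<close> of the coradical filtration of a connected cocommutative Hopf algebra is a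
  normal subcoalgebra: a subcoalgebra stable under the antipode and under both adjoint actions.
  Each of these maps \<open>f\<close> fixes \<open>H_0 = k1\<close> and satisfies \<open>\<Delta> \<circ> f = \<Sum> (f' \<otimes> f'') \<circ> \<Delta>\<close> with
  \<open>f'\<close> and \<open>f''\<close> maps of the same kind (this is where cocommutativity enters), so stability
  passes from \<open>H_n\<close> to \<open>H_(n+1) = \<Delta>\<^sup>-\<^sup>1(H \<otimes> H_n + H_0 \<otimes> H)\<close>. The subalgebra generated by a
  normal subcoalgebra is a normal Hopf subalgebra, because \<open>\<Delta>\<close> is multiplicative, \<open>S\<close> is
  anti-multiplicative and \<open>ad(h)(xy) = \<Sum> ad(h\<^sub>1)(x) ad(h\<^sub>2)(y)\<close>. As \<open>\<Gamma>\<^sup>0 = k = H_0\<close> and \<open>\<Gamma>\<^sup>n\<close>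
  is generated by \<open>H_(p^(n-1))\<close>, every \<open>\<Gamma>\<^sup>n\<close> is normal.\<close>

lemma sum_if_cond: "(\<Sum>j\<in>A. if P then f j else (0::'a::comm_monoid_add)) = (if P then (\<Sum>j\<in>A. f j) else 0)" by simp

lemma if_one_mult: "(if P then (1::'a::semiring_1) else 0) * x = (if P then x else 0)" by simp

lemma mult_if_one: "x * (if P then (1::'a::semiring_1) else 0) = (if P then x else 0)" by simp

lemma if_mult: "(if P then (y::'a::semiring_1) else 0) * x = (if P then y * x else 0)" by simp

lemma mult_if: "x * (if P then (y::'a::semiring_1) else 0) = (if P then x * y else 0)" by simp

lemmas if_zero_simps = if_one_mult mult_if_one if_mult mult_if sum_if_cond

lemma bvec_apply: "bvec i j = (if j = i then 1 else 0)" by (simp add: bvec_def)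

lemma sum_rotate3: "(\<Sum>a\<in>A. \<Sum>b\<in>B. \<Sum>c\<in>C. f a b c) = (\<Sum>c\<in>C. \<Sum>a\<in>A. \<Sum>b\<in>B. f a b c)"
  by (rule trans[OF sum.cong[OF refl sum.swap] sum.swap])

lemma sum_swap_mid: "(\<Sum>a\<in>A. \<Sum>b\<in>B. \<Sum>c\<in>C. \<Sum>e\<in>E. f a b c e) = (\<Sum>a\<in>A. \<Sum>c\<in>C. \<Sum>b\<in>B. \<Sum>e\<in>E. f a b c e)"
  by (intro sum.cong refl sum.swap)

lemma sum_rotate4: "(\<Sum>a\<in>A. \<Sum>b\<in>B. \<Sum>c\<in>C. \<Sum>e\<in>E. f a b c e) = (\<Sum>e\<in>E. \<Sum>a\<in>A. \<Sum>b\<in>B. \<Sum>c\<in>C. f a b c e)"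
  by (rule trans[OF sum.cong[OF refl sum_rotate3] sum.swap])

lemma sum_swap_pairs: "(\<Sum>i\<in>A. \<Sum>j\<in>B. \<Sum>a\<in>C. \<Sum>b\<in>D. f i j a b) = (\<Sum>a\<in>C. \<Sum>b\<in>D. \<Sum>i\<in>A. \<Sum>j\<in>B. f i j a b)"
proof -
  have "(\<Sum>i\<in>A. \<Sum>j\<in>B. \<Sum>a\<in>C. \<Sum>b\<in>D. f i j a b) = (\<Sum>a\<in>C. \<Sum>i\<in>A. \<Sum>j\<in>B. \<Sum>b\<in>D. f i j a b)"
    by (rule trans[OF sum_swap_mid sum.swap])
  also have "\<dots> = (\<Sum>a\<in>C. \<Sum>b\<in>D. \<Sum>i\<in>A. \<Sum>j\<in>B. f i j a b)"
    by (rule sum.cong[OF refl sum_rotate3])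
  finally show ?thesis .
qed

lemma sum_swap_pairs_rev: "(\<Sum>i\<in>A. \<Sum>j\<in>B. \<Sum>a\<in>C. \<Sum>b\<in>D. f i j a b) = (\<Sum>a\<in>C. \<Sum>b\<in>D. \<Sum>j\<in>B. \<Sum>i\<in>A. f i j a b)"
  by (rule trans[OF sum_swap_pairs sum.cong[OF refl sum.cong[OF refl sum.swap]]])

lemma sum_swap_pairs6: "(\<Sum>i1\<in>A. \<Sum>j1\<in>B. \<Sum>i2\<in>C. \<Sum>j2\<in>E. \<Sum>a\<in>F. \<Sum>b\<in>G. f i1 j1 i2 j2 a b)
  = (\<Sum>a\<in>F. \<Sum>b\<in>G. \<Sum>i1\<in>A. \<Sum>j1\<in>B. \<Sum>i2\<in>C. \<Sum>j2\<in>E. f i1 j1 i2 j2 a b)"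
  by (rule trans[OF sum.cong[OF refl sum.cong[OF refl sum_swap_pairs]] sum_swap_pairs])

lemma sum2_mult_sum2: "(\<Sum>p\<in>A. \<Sum>q\<in>B. (f p q::'k::comm_ring_1)) * (\<Sum>r\<in>C. \<Sum>w\<in>E. g r w) = (\<Sum>p\<in>A. \<Sum>q\<in>B. \<Sum>r\<in>C. \<Sum>w\<in>E. f p q * g r w)"
  by (simp add: sum_distrib_left sum_distrib_right) (rule sum_swap_pairs)

lemma sum2_pull_sum2: "(\<Sum>c\<in>A. \<Sum>e\<in>B. (X c e::'k::comm_ring_1) * (\<Sum>r\<in>C. \<Sum>w\<in>E. Y r w * F c e r w))
   = (\<Sum>r\<in>C. \<Sum>w\<in>E. Y r w * (\<Sum>c\<in>A. \<Sum>e\<in>B. X c e * F c e r w))"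
proof -
  have "(\<Sum>c\<in>A. \<Sum>e\<in>B. X c e * (\<Sum>r\<in>C. \<Sum>w\<in>E. Y r w * F c e r w))
     = (\<Sum>c\<in>A. \<Sum>e\<in>B. \<Sum>r\<in>C. \<Sum>w\<in>E. Y r w * (X c e * F c e r w))"
    by (simp add: sum_distrib_left mult_ac)
  also have "\<dots> = (\<Sum>r\<in>C. \<Sum>w\<in>E. \<Sum>c\<in>A. \<Sum>e\<in>B. Y r w * (X c e * F c e r w))"
    by (rule sum_swap_pairs)
  also have "\<dots> = (\<Sum>r\<in>C. \<Sum>w\<in>E. Y r w * (\<Sum>c\<in>A. \<Sum>e\<in>B. X c e * F c e r w))"
    by (simp add: sum_distrib_left)
  finally show ?thesis .
qed

section \<open>Algebras and coalgebras given by structure constants\<close>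

locale coalg_struct =
  fixes I :: "'i set" and Dc :: "'i \<Rightarrow> 'i \<Rightarrow> 'i \<Rightarrow> 'k::field" and ec :: "'i \<Rightarrow> 'k"
  assumes finI: "finite I"
  and coass: "\<lbrakk>l\<in>I; a\<in>I; b\<in>I; c\<in>I\<rbrakk> \<Longrightarrow> (\<Sum>i\<in>I. Dc l i c * Dc i a b) = (\<Sum>j\<in>I. Dc l a j * Dc j b c)"
  and counitL: "\<lbrakk>l\<in>I; a\<in>I\<rbrakk> \<Longrightarrow> (\<Sum>i\<in>I. ec i * Dc l i a) = (if l = a then 1 else 0)"
  and counitR: "\<lbrakk>l\<in>I; a\<in>I\<rbrakk> \<Longrightarrow> (\<Sum>j\<in>I. Dc l a j * ec j) = (if l = a then 1 else 0)"
begin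
lemma coassoc_sum:
  assumes "l \<in> I"
  shows "(\<Sum>i\<in>I. \<Sum>j\<in>I. Dc l i j * (\<Sum>a\<in>I. \<Sum>b\<in>I. Dc i a b * X a b j))
       = (\<Sum>a\<in>I. \<Sum>k\<in>I. Dc l a k * (\<Sum>b\<in>I. \<Sum>j\<in>I. Dc k b j * X a b j))"
proof -
  have "(\<Sum>i\<in>I. \<Sum>j\<in>I. Dc l i j * (\<Sum>a\<in>I. \<Sum>b\<in>I. Dc i a b * X a b j))
      = (\<Sum>i\<in>I. \<Sum>j\<in>I. \<Sum>a\<in>I. \<Sum>b\<in>I. Dc l i j * Dc i a b * X a b j)"
    by (simp add: sum_distrib_left mult.assoc)
  also have "\<dots> = (\<Sum>a\<in>I. \<Sum>b\<in>I. \<Sum>j\<in>I. \<Sum>i\<in>I. Dc l i j * Dc i a b * X a b j)"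
    by (rule sum_swap_pairs_rev)
  also have "\<dots> = (\<Sum>a\<in>I. \<Sum>b\<in>I. \<Sum>j\<in>I. (\<Sum>i\<in>I. Dc l i j * Dc i a b) * X a b j)"
    by (simp add: sum_distrib_right)
  also have "\<dots> = (\<Sum>a\<in>I. \<Sum>b\<in>I. \<Sum>j\<in>I. (\<Sum>k\<in>I. Dc l a k * Dc k b j) * X a b j)"
    using assms by (simp add: coass)
  also have "\<dots> = (\<Sum>a\<in>I. \<Sum>b\<in>I. \<Sum>j\<in>I. \<Sum>k\<in>I. Dc l a k * (Dc k b j * X a b j))"
    by (simp add: sum_distrib_right mult.assoc)
  also have "\<dots> = (\<Sum>a\<in>I. \<Sum>k\<in>I. \<Sum>b\<in>I. \<Sum>j\<in>I. Dc l a k * (Dc k b j * X a b j))"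
    by (rule sum.cong[OF refl], rule sum_rotate3)
  also have "\<dots> = (\<Sum>a\<in>I. \<Sum>k\<in>I. Dc l a k * (\<Sum>b\<in>I. \<Sum>j\<in>I. Dc k b j * X a b j))"
    by (simp add: sum_distrib_left)
  finally show ?thesis .
qed

lemma counit_sum_left: "l \<in> I \<Longrightarrow> (\<Sum>i\<in>I. \<Sum>j\<in>I. Dc l i j * (ec i * F j)) = F l"
proof -
  assume l: "l \<in> I"
  have "(\<Sum>i\<in>I. \<Sum>j\<in>I. Dc l i j * (ec i * F j)) = (\<Sum>j\<in>I. (\<Sum>i\<in>I. ec i * Dc l i j) * F j)"
    by (subst sum.swap) (simp add: sum_distrib_left sum_distrib_right mult_ac)
  also have "\<dots> = (\<Sum>j\<in>I. (if l = j then F j else 0))"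
    using l by (intro sum.cong) (auto simp: counitL)
  finally show ?thesis using l finI by simp
qed

lemma counit_sum_right: "l \<in> I \<Longrightarrow> (\<Sum>i\<in>I. \<Sum>j\<in>I. Dc l i j * (F i * ec j)) = F l"
proof -
  assume l: "l \<in> I"
  have "(\<Sum>i\<in>I. \<Sum>j\<in>I. Dc l i j * (F i * ec j)) = (\<Sum>i\<in>I. (\<Sum>j\<in>I. Dc l i j * ec j) * F i)"
    by (simp add: sum_distrib_left sum_distrib_right mult_ac)
  also have "\<dots> = (\<Sum>i\<in>I. (if l = i then F i else 0))"
    using l by (intro sum.cong) (auto simp: counitR)
  finally show ?thesis using l finI by simp
qed
end

locale alg_struct =
  fixes J :: "'j set" and Ma :: "'j \<Rightarrow> 'j \<Rightarrow> 'j \<Rightarrow> 'k::field" and ua :: "'j \<Rightarrow> 'k"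
  assumes finJ: "finite J"
  and assoc: "\<lbrakk>i\<in>J; j\<in>J; k\<in>J; s\<in>J\<rbrakk> \<Longrightarrow> (\<Sum>r\<in>J. Ma i j r * Ma r k s) = (\<Sum>r\<in>J. Ma j k r * Ma i r s)"
  and unitL: "\<lbrakk>j\<in>J; s\<in>J\<rbrakk> \<Longrightarrow> (\<Sum>r\<in>J. ua r * Ma r j s) = (if j = s then 1 else 0)"
  and unitR: "\<lbrakk>j\<in>J; s\<in>J\<rbrakk> \<Longrightarrow> (\<Sum>r\<in>J. ua r * Ma j r s) = (if j = s then 1 else 0)"
begin
definition amult where "amult v w t = (\<Sum>x\<in>J. \<Sum>y\<in>J. v x * w y * Ma x y t)"

lemma amult_assoc: assumes t: "t \<in> J" shows "amult (amult a b) c t = amult a (amult b c) t"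
proof -
  have "amult (amult a b) c t = (\<Sum>x\<in>J. \<Sum>y\<in>J. \<Sum>x'\<in>J. \<Sum>y'\<in>J. a x' * b y' * c y * (Ma x' y' x * Ma x y t))"
    unfolding amult_def by (simp add: sum_distrib_left sum_distrib_right mult_ac)
  also have "\<dots> = (\<Sum>x'\<in>J. \<Sum>y'\<in>J. \<Sum>y\<in>J. \<Sum>x\<in>J. a x' * b y' * c y * (Ma x' y' x * Ma x y t))"
    by (rule sum_swap_pairs_rev)
  also have "\<dots> = (\<Sum>x'\<in>J. \<Sum>y'\<in>J. \<Sum>y\<in>J. a x' * b y' * c y * (\<Sum>x\<in>J. Ma x' y' x * Ma x y t))"
    by (simp add: sum_distrib_left)
  also have "\<dots> = (\<Sum>x'\<in>J. \<Sum>y'\<in>J. \<Sum>y\<in>J. a x' * b y' * c y * (\<Sum>z\<in>J. Ma y' y z * Ma x' z t))"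
    using t by (simp add: assoc)
  also have "\<dots> = (\<Sum>x'\<in>J. \<Sum>y'\<in>J. \<Sum>y\<in>J. \<Sum>z\<in>J. a x' * b y' * c y * (Ma y' y z * Ma x' z t))"
    by (simp add: sum_distrib_left)
  also have "\<dots> = (\<Sum>x'\<in>J. \<Sum>z\<in>J. \<Sum>y'\<in>J. \<Sum>y\<in>J. a x' * b y' * c y * (Ma y' y z * Ma x' z t))"
    by (rule sum.cong[OF refl], rule sum_rotate3)
  also have "\<dots> = amult a (amult b c) t"
    unfolding amult_def by (simp add: sum_distrib_left sum_distrib_right mult_ac)
  finally show ?thesis .
qed

lemma amult_sum2_left: "amult (\<lambda>x. \<Sum>a\<in>A. \<Sum>b\<in>B. c a b * v a b x) w t = (\<Sum>a\<in>A. \<Sum>b\<in>B. c a b * amult (v a b) w t)"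
proof -
  have "amult (\<lambda>x. \<Sum>a\<in>A. \<Sum>b\<in>B. c a b * v a b x) w t = (\<Sum>x\<in>J. \<Sum>y\<in>J. \<Sum>a\<in>A. \<Sum>b\<in>B. c a b * (v a b x * w y * Ma x y t))"
    unfolding amult_def by (simp add: sum_distrib_left sum_distrib_right mult_ac)
  also have "\<dots> = (\<Sum>a\<in>A. \<Sum>b\<in>B. \<Sum>x\<in>J. \<Sum>y\<in>J. c a b * (v a b x * w y * Ma x y t))"
    by (rule sum_swap_pairs)
  also have "\<dots> = (\<Sum>a\<in>A. \<Sum>b\<in>B. c a b * amult (v a b) w t)"
    unfolding amult_def by (simp add: sum_distrib_left)
  finally show ?thesis .
qed

lemma amult_sum2_right: "amult w (\<lambda>x. \<Sum>a\<in>A. \<Sum>b\<in>B. c a b * v a b x) t = (\<Sum>a\<in>A. \<Sum>b\<in>B. c a b * amult w (v a b) t)"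
proof -
  have "amult w (\<lambda>x. \<Sum>a\<in>A. \<Sum>b\<in>B. c a b * v a b x) t = (\<Sum>x\<in>J. \<Sum>y\<in>J. \<Sum>a\<in>A. \<Sum>b\<in>B. c a b * (w x * v a b y * Ma x y t))"
    unfolding amult_def by (simp add: sum_distrib_left sum_distrib_right mult_ac)
  also have "\<dots> = (\<Sum>a\<in>A. \<Sum>b\<in>B. \<Sum>x\<in>J. \<Sum>y\<in>J. c a b * (w x * v a b y * Ma x y t))"
    by (rule sum_swap_pairs)
  also have "\<dots> = (\<Sum>a\<in>A. \<Sum>b\<in>B. c a b * amult w (v a b) t)"
    unfolding amult_def by (simp add: sum_distrib_left)
  finally show ?thesis .
qed

lemma amult_unit_left: "t \<in> J \<Longrightarrow> amult ua w t = w t"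
proof -
  assume t: "t \<in> J"
  have "amult ua w t = (\<Sum>y\<in>J. (\<Sum>x\<in>J. ua x * Ma x y t) * w y)"
    unfolding amult_def by (subst sum.swap) (simp add: sum_distrib_left sum_distrib_right mult_ac)
  also have "\<dots> = (\<Sum>y\<in>J. if y = t then w y else 0)"
    using t by (intro sum.cong) (auto simp: unitL)
  finally show ?thesis using t finJ by simp
qed

lemma amult_unit_right: "t \<in> J \<Longrightarrow> amult w ua t = w t"
proof -
  assume t: "t \<in> J"
  have "amult w ua t = (\<Sum>x\<in>J. (\<Sum>y\<in>J. ua y * Ma x y t) * w x)"
    unfolding amult_def by (simp add: sum_distrib_left sum_distrib_right mult_ac)
  also have "\<dots> = (\<Sum>x\<in>J. if x = t then w x else 0)"
    using t by (intro sum.cong) (auto simp: unitR)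
  finally show ?thesis using t finJ by simp
qed

definition basis where "basis a = (\<lambda>y. if y = a then 1 else 0)"

lemma amult_basis_left: "a \<in> J \<Longrightarrow> amult (basis a) w t = (\<Sum>y\<in>J. w y * Ma a y t)"
  unfolding amult_def basis_def by (simp add: if_distrib[of "\<lambda>x. x * _"] sum.delta' sum.delta sum_if_cond finJ cong: if_cong)
lemma amult_basis_right: "b \<in> J \<Longrightarrow> amult v (basis b) t = (\<Sum>x\<in>J. v x * Ma x b t)"
  unfolding amult_def basis_def by (simp add: if_distrib[of "\<lambda>x. _ * x * _"] sum.delta' sum.delta sum_if_cond finJ cong: if_cong)
lemma amult_basis_basis: "a \<in> J \<Longrightarrow> b \<in> J \<Longrightarrow> amult (basis a) (basis b) t = Ma a b t"
  by (simp add: amult_basis_left) (simp add: basis_def if_distrib[of "\<lambda>x. x * _"] sum.delta' sum.delta sum_if_cond finJ cong: if_cong)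

lemma amult_sum_left: "amult (\<lambda>x. \<Sum>a\<in>A. c a * v a x) w t = (\<Sum>a\<in>A. c a * amult (v a) w t)"
proof -
  have "amult (\<lambda>x. \<Sum>a\<in>A. c a * v a x) w t = (\<Sum>x\<in>J. \<Sum>y\<in>J. \<Sum>a\<in>A. c a * (v a x * w y * Ma x y t))"
    unfolding amult_def by (simp add: sum_distrib_left sum_distrib_right mult_ac)
  also have "\<dots> = (\<Sum>a\<in>A. \<Sum>x\<in>J. \<Sum>y\<in>J. c a * (v a x * w y * Ma x y t))"
    by (rule sum_rotate3)
  also have "\<dots> = (\<Sum>a\<in>A. c a * amult (v a) w t)"
    unfolding amult_def by (simp add: sum_distrib_left)
  finally show ?thesis .
qed

lemma amult_sum_right: "amult w (\<lambda>x. \<Sum>a\<in>A. c a * v a x) t = (\<Sum>a\<in>A. c a * amult w (v a) t)"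
proof -
  have "amult w (\<lambda>x. \<Sum>a\<in>A. c a * v a x) t = (\<Sum>x\<in>J. \<Sum>y\<in>J. \<Sum>a\<in>A. c a * (w x * v a y * Ma x y t))"
    unfolding amult_def by (simp add: sum_distrib_left sum_distrib_right mult_ac)
  also have "\<dots> = (\<Sum>a\<in>A. \<Sum>x\<in>J. \<Sum>y\<in>J. c a * (w x * v a y * Ma x y t))"
    by (rule sum_rotate3)
  also have "\<dots> = (\<Sum>a\<in>A. c a * amult w (v a) t)"
    unfolding amult_def by (simp add: sum_distrib_left)
  finally show ?thesis .
qed

lemma amult_scale_left: "amult (\<lambda>x. c * v x) w t = c * amult v w t"
  unfolding amult_def by (simp add: sum_distrib_left mult_ac)
lemma amult_scale_right: "amult v (\<lambda>x. c * w x) t = c * amult v w t"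
  unfolding amult_def by (simp add: sum_distrib_left mult_ac)
lemma amult_cong: "(\<And>x. x \<in> J \<Longrightarrow> v x = v' x) \<Longrightarrow> (\<And>x. x \<in> J \<Longrightarrow> w x = w' x) \<Longrightarrow> amult v w t = amult v' w' t"
  unfolding amult_def by (intro sum.cong) auto
end

locale convolution = coalg_struct I Dc ec + alg_struct J Ma ua
  for I :: "'i set" and Dc :: "'i \<Rightarrow> 'i \<Rightarrow> 'i \<Rightarrow> 'k::field" and ec
  and J :: "'j set" and Ma :: "'j \<Rightarrow> 'j \<Rightarrow> 'j \<Rightarrow> 'k" and ua
begin
definition convol where "convol f g l t = (\<Sum>i\<in>I. \<Sum>j\<in>I. Dc l i j * amult (f i) (g j) t)"
definition convol_unit where "convol_unit l t = ec l * ua t"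

lemma convol_cong: "(\<And>i x. i \<in> I \<Longrightarrow> x \<in> J \<Longrightarrow> f i x = f' i x) \<Longrightarrow> (\<And>i x. i \<in> I \<Longrightarrow> x \<in> J \<Longrightarrow> g i x = g' i x)
   \<Longrightarrow> convol f g l t = convol f' g' l t"
  unfolding convol_def by (intro sum.cong refl arg_cong2[where f="(*)"] amult_cong) auto

lemma convol_assoc: assumes l: "l \<in> I" and t: "t \<in> J"
  shows "convol (convol f g) h l t = convol f (convol g h) l t"
proof -
  have e1: "convol f g i = (\<lambda>x. \<Sum>a\<in>I. \<Sum>b\<in>I. Dc i a b * amult (f a) (g b) x)" for i
    by (rule ext) (simp add: convol_def)
  have e2: "convol g h i = (\<lambda>x. \<Sum>a\<in>I. \<Sum>b\<in>I. Dc i a b * amult (g a) (h b) x)" for i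
    by (rule ext) (simp add: convol_def)
  have "convol (convol f g) h l t = (\<Sum>i\<in>I. \<Sum>j\<in>I. Dc l i j * (\<Sum>a\<in>I. \<Sum>b\<in>I. Dc i a b * amult (amult (f a) (g b)) (h j) t))"
    unfolding convol_def[of "convol f g"] e1 amult_sum2_left ..
  also have "\<dots> = (\<Sum>a\<in>I. \<Sum>k\<in>I. Dc l a k * (\<Sum>b\<in>I. \<Sum>j\<in>I. Dc k b j * amult (amult (f a) (g b)) (h j) t))"
    by (rule coassoc_sum[OF l])
  also have "\<dots> = (\<Sum>a\<in>I. \<Sum>k\<in>I. Dc l a k * (\<Sum>b\<in>I. \<Sum>j\<in>I. Dc k b j * amult (f a) (amult (g b) (h j)) t))"
    using t by (simp add: amult_assoc)
  also have "\<dots> = convol f (convol g h) l t"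
    unfolding convol_def[of f] e2 amult_sum2_right ..
  finally show ?thesis .
qed

lemma convol_unit_left: "l \<in> I \<Longrightarrow> t \<in> J \<Longrightarrow> convol convol_unit f l t = f l t"
proof -
  assume l: "l \<in> I" and t: "t \<in> J"
  have "convol convol_unit f l t = (\<Sum>i\<in>I. \<Sum>j\<in>I. Dc l i j * (ec i * f j t))"
    unfolding convol_def convol_unit_def using t by (simp add: amult_scale_left amult_unit_left)
  also have "\<dots> = f l t" by (rule counit_sum_left[OF l])
  finally show ?thesis .
qed

lemma convol_unit_right: "l \<in> I \<Longrightarrow> t \<in> J \<Longrightarrow> convol f convol_unit l t = f l t"
proof -
  assume l: "l \<in> I" and t: "t \<in> J"
  have "convol f convol_unit l t = (\<Sum>i\<in>I. \<Sum>j\<in>I. Dc l i j * (f i t * ec j))"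
    unfolding convol_def convol_unit_def using t by (simp add: amult_scale_right amult_unit_right mult_ac)
  also have "\<dots> = f l t" by (rule counit_sum_right[OF l])
  finally show ?thesis .
qed

lemma convol_inverse_unique:
  assumes gf: "\<And>l t. l \<in> I \<Longrightarrow> t \<in> J \<Longrightarrow> convol g f l t = convol_unit l t"
    and fh: "\<And>l t. l \<in> I \<Longrightarrow> t \<in> J \<Longrightarrow> convol f h l t = convol_unit l t"
    and l: "l \<in> I" and t: "t \<in> J"
  shows "g l t = h l t"
proof -
  have "g l t = convol g convol_unit l t" using l t by (simp add: convol_unit_right)
  also have "\<dots> = convol g (convol f h) l t" by (rule convol_cong) (auto simp: fh)
  also have "\<dots> = convol (convol g f) h l t" using l t by (simp add: convol_assoc)
  also have "\<dots> = convol convol_unit h l t" by (rule convol_cong) (auto simp: gf)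
  also have "\<dots> = h l t" using l t by (simp add: convol_unit_left)
  finally show ?thesis .
qed
end

lemma sum_Times: "(\<Sum>p\<in>A\<times>B. f p) = (\<Sum>a\<in>A. \<Sum>b\<in>B. f (a,b))"
  by (simp add: sum.cartesian_product)

definition sc_tensor :: "('i \<Rightarrow> 'i \<Rightarrow> 'i \<Rightarrow> 'k::field) \<Rightarrow> 'i\<times>'i \<Rightarrow> 'i\<times>'i \<Rightarrow> 'i\<times>'i \<Rightarrow> 'k" where
  "sc_tensor Dc l i j = Dc (fst l) (fst i) (fst j) * Dc (snd l) (snd i) (snd j)"
definition fun_tensor :: "('i \<Rightarrow> 'k::field) \<Rightarrow> 'i\<times>'i \<Rightarrow> 'k" where
  "fun_tensor ec i = ec (fst i) * ec (snd i)"

lemma sum_Times_mult: "(\<Sum>p\<in>A\<times>B. f (fst p) * g (snd p) :: 'k::comm_semiring_1) = (\<Sum>a\<in>A. f a) * (\<Sum>b\<in>B. g b)"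
  unfolding sum_Times fst_conv snd_conv by (rule sum_product[symmetric])

lemma coalg_struct_tensor:
  assumes "coalg_struct I Dc ec"
  shows "coalg_struct (I \<times> I) (sc_tensor Dc) (fun_tensor ec)"
proof -
  interpret coalg_struct I Dc ec by fact
  show ?thesis
  proof
    show "finite (I \<times> I)" using finI by simp
  next
    fix l a b c assume h: "l \<in> I \<times> I" "a \<in> I \<times> I" "b \<in> I \<times> I" "c \<in> I \<times> I"
    have "(\<Sum>i\<in>I \<times> I. sc_tensor Dc l i c * sc_tensor Dc i a b)
      = (\<Sum>i\<in>I \<times> I. (Dc (fst l) (fst i) (fst c) * Dc (fst i) (fst a) (fst b)) * (Dc (snd l) (snd i) (snd c) * Dc (snd i) (snd a) (snd b)))"
      by (simp add: sc_tensor_def mult_ac)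
    also have "\<dots> = (\<Sum>i\<in>I. Dc (fst l) i (fst c) * Dc i (fst a) (fst b)) * (\<Sum>i\<in>I. Dc (snd l) i (snd c) * Dc i (snd a) (snd b))"
      by (rule sum_Times_mult)
    also have "\<dots> = (\<Sum>j\<in>I. Dc (fst l) (fst a) j * Dc j (fst b) (fst c)) * (\<Sum>j\<in>I. Dc (snd l) (snd a) j * Dc j (snd b) (snd c))"
      using h by (auto simp: coass mem_Times_iff)
    also have "\<dots> = (\<Sum>j\<in>I \<times> I. (Dc (fst l) (fst a) (fst j) * Dc (fst j) (fst b) (fst c)) * (Dc (snd l) (snd a) (snd j) * Dc (snd j) (snd b) (snd c)))"
      by (rule sum_Times_mult[symmetric])
    also have "\<dots> = (\<Sum>j\<in>I \<times> I. sc_tensor Dc l a j * sc_tensor Dc j b c)"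
      by (simp add: sc_tensor_def mult_ac)
    finally show "(\<Sum>i\<in>I \<times> I. sc_tensor Dc l i c * sc_tensor Dc i a b) = (\<Sum>j\<in>I \<times> I. sc_tensor Dc l a j * sc_tensor Dc j b c)" .
  next
    fix l a assume h: "l \<in> I \<times> I" "a \<in> I \<times> I"
    have "(\<Sum>i\<in>I \<times> I. fun_tensor ec i * sc_tensor Dc l i a) = (\<Sum>i\<in>I \<times> I. (ec (fst i) * Dc (fst l) (fst i) (fst a)) * (ec (snd i) * Dc (snd l) (snd i) (snd a)))"
      by (simp add: fun_tensor_def sc_tensor_def mult_ac)
    also have "\<dots> = (\<Sum>i\<in>I. ec i * Dc (fst l) i (fst a)) * (\<Sum>i\<in>I. ec i * Dc (snd l) i (snd a))"
      by (rule sum_Times_mult)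
    also have "\<dots> = (if l = a then 1 else 0)"
      using h by (auto simp: counitL mem_Times_iff prod_eq_iff)
    finally show "(\<Sum>i\<in>I \<times> I. fun_tensor ec i * sc_tensor Dc l i a) = (if l = a then 1 else 0)" .
  next
    fix l a assume h: "l \<in> I \<times> I" "a \<in> I \<times> I"
    have "(\<Sum>j\<in>I \<times> I. sc_tensor Dc l a j * fun_tensor ec j) = (\<Sum>j\<in>I \<times> I. (Dc (fst l) (fst a) (fst j) * ec (fst j)) * (Dc (snd l) (snd a) (snd j) * ec (snd j)))"
      by (simp add: fun_tensor_def sc_tensor_def mult_ac)
    also have "\<dots> = (\<Sum>j\<in>I. Dc (fst l) (fst a) j * ec j) * (\<Sum>j\<in>I. Dc (snd l) (snd a) j * ec j)"
      by (rule sum_Times_mult)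
    also have "\<dots> = (if l = a then 1 else 0)"
      using h by (auto simp: counitR mem_Times_iff prod_eq_iff)
    finally show "(\<Sum>j\<in>I \<times> I. sc_tensor Dc l a j * fun_tensor ec j) = (if l = a then 1 else 0)" .
  qed
qed

lemma alg_struct_tensor:
  assumes "alg_struct J Ma ua"
  shows "alg_struct (J \<times> J) (sc_tensor Ma) (fun_tensor ua)"
proof -
  interpret alg_struct J Ma ua by fact
  show ?thesis
  proof
    show "finite (J \<times> J)" using finJ by simp
  next
    fix i j k s assume h: "i \<in> J \<times> J" "j \<in> J \<times> J" "k \<in> J \<times> J" "s \<in> J \<times> J"
    have "(\<Sum>r\<in>J \<times> J. sc_tensor Ma i j r * sc_tensor Ma r k s)
      = (\<Sum>r\<in>J \<times> J. (Ma (fst i) (fst j) (fst r) * Ma (fst r) (fst k) (fst s)) * (Ma (snd i) (snd j) (snd r) * Ma (snd r) (snd k) (snd s)))"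
      by (simp add: sc_tensor_def mult_ac)
    also have "\<dots> = (\<Sum>r\<in>J. Ma (fst i) (fst j) r * Ma r (fst k) (fst s)) * (\<Sum>r\<in>J. Ma (snd i) (snd j) r * Ma r (snd k) (snd s))"
      by (rule sum_Times_mult)
    also have "\<dots> = (\<Sum>r\<in>J. Ma (fst j) (fst k) r * Ma (fst i) r (fst s)) * (\<Sum>r\<in>J. Ma (snd j) (snd k) r * Ma (snd i) r (snd s))"
      using h by (auto simp: assoc mem_Times_iff)
    also have "\<dots> = (\<Sum>r\<in>J \<times> J. (Ma (fst j) (fst k) (fst r) * Ma (fst i) (fst r) (fst s)) * (Ma (snd j) (snd k) (snd r) * Ma (snd i) (snd r) (snd s)))"
      by (rule sum_Times_mult[symmetric])
    also have "\<dots> = (\<Sum>r\<in>J \<times> J. sc_tensor Ma j k r * sc_tensor Ma i r s)"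
      by (simp add: sc_tensor_def mult_ac)
    finally show "(\<Sum>r\<in>J \<times> J. sc_tensor Ma i j r * sc_tensor Ma r k s) = (\<Sum>r\<in>J \<times> J. sc_tensor Ma j k r * sc_tensor Ma i r s)" .
  next
    fix j s assume h: "j \<in> J \<times> J" "s \<in> J \<times> J"
    have "(\<Sum>r\<in>J \<times> J. fun_tensor ua r * sc_tensor Ma r j s) = (\<Sum>r\<in>J \<times> J. (ua (fst r) * Ma (fst r) (fst j) (fst s)) * (ua (snd r) * Ma (snd r) (snd j) (snd s)))"
      by (simp add: fun_tensor_def sc_tensor_def mult_ac)
    also have "\<dots> = (\<Sum>r\<in>J. ua r * Ma r (fst j) (fst s)) * (\<Sum>r\<in>J. ua r * Ma r (snd j) (snd s))"
      by (rule sum_Times_mult)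
    also have "\<dots> = (if j = s then 1 else 0)"
      using h by (auto simp: unitL mem_Times_iff prod_eq_iff)
    finally show "(\<Sum>r\<in>J \<times> J. fun_tensor ua r * sc_tensor Ma r j s) = (if j = s then 1 else 0)" .
  next
    fix j s assume h: "j \<in> J \<times> J" "s \<in> J \<times> J"
    have "(\<Sum>r\<in>J \<times> J. fun_tensor ua r * sc_tensor Ma j r s) = (\<Sum>r\<in>J \<times> J. (ua (fst r) * Ma (fst j) (fst r) (fst s)) * (ua (snd r) * Ma (snd j) (snd r) (snd s)))"
      by (simp add: fun_tensor_def sc_tensor_def mult_ac)
    also have "\<dots> = (\<Sum>r\<in>J. ua r * Ma (fst j) r (fst s)) * (\<Sum>r\<in>J. ua r * Ma (snd j) r (snd s))"
      by (rule sum_Times_mult)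
    also have "\<dots> = (if j = s then 1 else 0)"
      using h by (auto simp: unitR mem_Times_iff prod_eq_iff)
    finally show "(\<Sum>r\<in>J \<times> J. fun_tensor ua r * sc_tensor Ma j r s) = (if j = s then 1 else 0)" .
  qed
qed

section \<open>Linear closure and tensor products of subspaces\<close>

definition lin_closed :: "('a \<Rightarrow> 'k::field) set \<Rightarrow> bool" where
  "lin_closed W \<longleftrightarrow> zv \<in> W \<and> (\<forall>v\<in>W. \<forall>w\<in>W. addv v w \<in> W) \<and> (\<forall>c. \<forall>v\<in>W. smul c v \<in> W)"

lemma lin_closedI: "zv \<in> W \<Longrightarrow> (\<And>v w. v\<in>W \<Longrightarrow> w\<in>W \<Longrightarrow> addv v w \<in> W) \<Longrightarrow> (\<And>c v. v\<in>W \<Longrightarrow> smul c v \<in> W) \<Longrightarrow> lin_closed W"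
  by (auto simp: lin_closed_def)

lemma lin_closed_zv: "lin_closed W \<Longrightarrow> zv \<in> W" by (simp add: lin_closed_def)
lemma lin_closed_add: "lin_closed W \<Longrightarrow> v\<in>W \<Longrightarrow> w\<in>W \<Longrightarrow> addv v w \<in> W" by (simp add: lin_closed_def)
lemma lin_closed_smul: "lin_closed W \<Longrightarrow> v\<in>W \<Longrightarrow> smul c v \<in> W" by (simp add: lin_closed_def)

lemma lin_closed_kspan: "lin_closed (kspan S)"
  by (auto simp: lin_closed_def intro: kspan.intros)

lemma kspan_least: "lin_closed W \<Longrightarrow> S \<subseteq> W \<Longrightarrow> kspan S \<subseteq> W"
proof
  fix x assume W: "lin_closed W" and S: "S \<subseteq> W" and x: "x \<in> kspan S"
  from x show "x \<in> W" using W S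
    by (induction rule: kspan.induct) (auto simp: lin_closed_def)
qed

lemma kspan_mono: "S \<subseteq> T \<Longrightarrow> kspan S \<subseteq> kspan T"
  by (rule kspan_least[OF lin_closed_kspan]) (auto intro: kspan.kspan_base)

lemma vsum_empty: "vsum f {} = zv" by (simp add: vsum_def zv_def)
lemma vsum_insert: "finite A \<Longrightarrow> i \<notin> A \<Longrightarrow> vsum f (insert i A) = addv (f i) (vsum f A)"
  by (simp add: vsum_def addv_def)

lemma lin_closed_vsum: assumes W: "lin_closed W" and A: "finite A" shows "(\<And>i. i\<in>A \<Longrightarrow> f i \<in> W) \<Longrightarrow> vsum f A \<in> W"
  using A
proof (induction A rule: finite_induct)
  case empty then show ?case using W by (simp add: vsum_empty lin_closed_zv)
next
  case (insert i A) then show ?case using W by (simp add: vsum_insert lin_closed_add)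
qed

lemma vsum_cong: "(\<And>p. p \<in> A \<Longrightarrow> f p = g p) \<Longrightarrow> vsum f A = vsum g A"
  by (simp add: vsum_def fun_eq_iff)

lemma vsum_apply: "vsum f A x = (\<Sum>i\<in>A. f i x)" by (simp add: vsum_def)
lemma smul_apply: "smul c v x = c * v x" by (simp add: smul_def)
lemma addv_apply: "addv v w x = v x + w x" by (simp add: addv_def)
lemma lin_closed_sum_sp: "lin_closed A \<Longrightarrow> lin_closed B \<Longrightarrow> lin_closed (sum_sp A B)"
proof (rule lin_closedI)
  assume A: "lin_closed A" and B: "lin_closed B"
  have "zv = addv zv zv" by (simp add: zv_def addv_def)
  then show "zv \<in> sum_sp A B" unfolding sum_sp_def using A B lin_closed_zv by blast
  fix v w assume "v \<in> sum_sp A B" "w \<in> sum_sp A B"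
  then obtain a b a' b' where "v = addv a b" "w = addv a' b'" "a\<in>A" "b\<in>B" "a'\<in>A" "b'\<in>B"
    by (auto simp: sum_sp_def)
  moreover have "addv (addv a b) (addv a' b') = addv (addv a a') (addv b b')"
    by (simp add: addv_def fun_eq_iff algebra_simps)
  ultimately show "addv v w \<in> sum_sp A B" unfolding sum_sp_def using A B lin_closed_add by blast
next
  fix c v assume A: "lin_closed A" and B: "lin_closed B" and "v \<in> sum_sp A B"
  then obtain a b where "v = addv a b" "a\<in>A" "b\<in>B" by (auto simp: sum_sp_def)
  moreover have "smul c (addv a b) = addv (smul c a) (smul c b)"
    by (simp add: addv_def smul_def fun_eq_iff algebra_simps)
  ultimately show "smul c v \<in> sum_sp A B" unfolding sum_sp_def using A B lin_closed_smul by blast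
qed


lemma tens_sp_mono: "A \<subseteq> A' \<Longrightarrow> B \<subseteq> B' \<Longrightarrow> tens_sp A B \<subseteq> tens_sp A' B'"
  unfolding tens_sp_def by (rule kspan_mono) blast

lemma lin_closed_tens_sp: "lin_closed (tens_sp A B)"
  by (simp add: tens_sp_def lin_closed_kspan)

lemma tens_sp_base: "a \<in> A \<Longrightarrow> b \<in> B \<Longrightarrow> tens_prod a b \<in> tens_sp A B"
  unfolding tens_sp_def by (rule kspan.kspan_base) blast

lemma tens_sp_rank_one_step:
  fixes T :: "nat \<times> nat \<Rightarrow> 'k::field"
  assumes X: "lin_closed X" and Y: "lin_closed Y"
    and supp: "\<forall>i j. T (i,j) \<noteq> 0 \<longrightarrow> i < n \<and> j < n"
    and rows: "\<forall>i<n. (\<lambda>j. T (i,j)) \<in> Y" and cols: "\<forall>j<n. (\<lambda>i. T (i,j)) \<in> X"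
    and i0: "i0 < n" and k: "T (i0,j0) \<noteq> 0"
    and T': "T' = (\<lambda>p. T p - T (fst p, j0) * T (i0, snd p) / T (i0,j0))"
  shows "T = addv T' (smul (1 / T (i0,j0)) (tens_prod (\<lambda>i. T (i,j0)) (\<lambda>j. T (i0,j))))"
    and "tens_prod (\<lambda>i. T (i,j0)) (\<lambda>j. T (i0,j)) \<in> tens_sp X Y"
    and "\<forall>i j. T' (i,j) \<noteq> 0 \<longrightarrow> i < n \<and> j < n"
    and "\<forall>i<n. (\<lambda>j. T' (i,j)) \<in> Y" and "\<forall>j<n. (\<lambda>i. T' (i,j)) \<in> X"
    and "{i. i<n \<and> (\<exists>j. T' (i,j) \<noteq> 0)} \<subseteq> {i. i<n \<and> (\<exists>j. T (i,j) \<noteq> 0)} - {i0}"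
proof -
  have j0: "j0 < n" using supp k by blast
  show "T = addv T' (smul (1 / T (i0,j0)) (tens_prod (\<lambda>i. T (i,j0)) (\<lambda>j. T (i0,j))))"
    using k by (auto simp: fun_eq_iff addv_def smul_def tens_prod_def T')
  show "tens_prod (\<lambda>i. T (i,j0)) (\<lambda>j. T (i0,j)) \<in> tens_sp X Y"
    using cols rows i0 j0 by (intro tens_sp_base) auto
  show "\<forall>i j. T' (i,j) \<noteq> 0 \<longrightarrow> i < n \<and> j < n"
  proof (intro allI impI)
    fix i j assume "T' (i,j) \<noteq> 0"
    then have "T (i,j) \<noteq> 0 \<or> T (i,j0) \<noteq> 0 \<and> T (i0,j) \<noteq> 0" by (auto simp: T')
    then show "i < n \<and> j < n" using supp by blast
  qed
  show "\<forall>i<n. (\<lambda>j. T' (i,j)) \<in> Y"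
  proof (intro allI impI)
    fix i assume "i < n"
    have "(\<lambda>j. T' (i,j)) = addv (\<lambda>j. T (i,j)) (smul (- T (i,j0) / T (i0,j0)) (\<lambda>j. T (i0,j)))"
      by (auto simp: fun_eq_iff addv_def smul_def T')
    then show "(\<lambda>j. T' (i,j)) \<in> Y" using rows \<open>i < n\<close> i0 Y by (simp add: lin_closed_add lin_closed_smul)
  qed
  show "\<forall>j<n. (\<lambda>i. T' (i,j)) \<in> X"
  proof (intro allI impI)
    fix j assume "j < n"
    have "(\<lambda>i. T' (i,j)) = addv (\<lambda>i. T (i,j)) (smul (- T (i0,j) / T (i0,j0)) (\<lambda>i. T (i,j0)))"
      by (auto simp: fun_eq_iff addv_def smul_def T')
    then show "(\<lambda>i. T' (i,j)) \<in> X" using cols \<open>j < n\<close> j0 X by (simp add: lin_closed_add lin_closed_smul)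
  qed
  show "{i. i<n \<and> (\<exists>j. T' (i,j) \<noteq> 0)} \<subseteq> {i. i<n \<and> (\<exists>j. T (i,j) \<noteq> 0)} - {i0}"
  proof clarify
    fix i j assume "i < n" "T' (i,j) \<noteq> 0"
    moreover have "T' (i0,j) = 0" using k by (simp add: T')
    moreover have "T' (i,j) = 0" if "\<forall>j. T (i,j) = 0" using that by (simp add: T')
    ultimately show "i \<in> {i. i<n \<and> (\<exists>j. T (i,j) \<noteq> 0)} - {i0}" by auto
  qed
qed

lemma tens_sp_of_rows_cols:
  fixes T :: "nat \<times> nat \<Rightarrow> 'k::field"
  assumes X: "lin_closed X" and Y: "lin_closed Y"
  shows "(\<forall>i j. T (i,j) \<noteq> 0 \<longrightarrow> i < n \<and> j < n) \<Longrightarrow> (\<forall>i<n. (\<lambda>j. T (i,j)) \<in> Y) \<Longrightarrow> (\<forall>j<n. (\<lambda>i. T (i,j)) \<in> X)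
    \<Longrightarrow> T \<in> tens_sp X Y"
proof (induction "card {i. i<n \<and> (\<exists>j. T (i,j) \<noteq> 0)}" arbitrary: T rule: less_induct)
  case (less T)
  show ?case
  proof (cases "{i. i<n \<and> (\<exists>j. T (i,j) \<noteq> 0)} = {}")
    case True
    have "T = zv"
    proof
      fix p :: "nat \<times> nat"
      obtain i j where p: "p = (i,j)" by (cases p)
      have "T (i,j) = 0" using True less.prems(1) by blast
      then show "T p = zv p" by (simp add: p zv_def)
    qed
    then show ?thesis using lin_closed_zv[OF lin_closed_tens_sp] by simp
  next
    case False
    then obtain i0 j0 where i0: "i0 < n" and k: "T (i0,j0) \<noteq> 0" by auto
    define T' where "T' = (\<lambda>p. T p - T (fst p, j0) * T (i0, snd p) / T (i0,j0))"
    note step = tens_sp_rank_one_step[OF X Y less.prems i0 k T'_def]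
    have "card {i. i<n \<and> (\<exists>j. T' (i,j) \<noteq> 0)} < card {i. i<n \<and> (\<exists>j. T (i,j) \<noteq> 0)}"
    proof -
      have "card {i. i<n \<and> (\<exists>j. T' (i,j) \<noteq> 0)} \<le> card ({i. i<n \<and> (\<exists>j. T (i,j) \<noteq> 0)} - {i0})"
        by (rule card_mono[OF _ step(6)]) (rule finite_subset[of _ "{..<n}"], auto)
      also have "\<dots> < card {i. i<n \<and> (\<exists>j. T (i,j) \<noteq> 0)}"
        using i0 k by (intro card_Diff1_less) auto
      finally show ?thesis .
    qed
    then have "T' \<in> tens_sp X Y" by (rule less.hyps[OF _ step(3) step(4) step(5)])
    then show ?thesis
      by (subst step(1)) (intro lin_closed_add[OF lin_closed_tens_sp] lin_closed_smul[OF lin_closed_tens_sp] step(2))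
  qed
qed

section \<open>Finite-dimensional Hopf algebras\<close>

locale fd_hopf =
  fixes H :: "'k::field hopf"
  assumes hopf: "hopf_algebra H"
begin

abbreviation "d \<equiv> dim H"

abbreviation "V \<equiv> vecs H"

abbreviation "m \<equiv> mu H"

abbreviation "D \<equiv> delta H"

abbreviation "ep \<equiv> eps H"

abbreviation "s \<equiv> anti H"

abbreviation "u \<equiv> unit H"

lemma bvec_in_vecs: "i < d \<Longrightarrow> bvec i \<in> V"
  by (simp add: vecs_def bvec_def)

lemma hmult_bvec_right: "k < d \<Longrightarrow> hmult H v (bvec k) t = (if t < d then (\<Sum>a<d. v a * m a k t) else 0)"
  unfolding hmult_def bvec_def
  by (simp add: if_zero_simps)

lemma hmult_bvec_left: "i < d \<Longrightarrow> hmult H (bvec i) w t = (if t < d then (\<Sum>b<d. w b * m i b t) else 0)"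
  unfolding hmult_def bvec_def
  by (simp add: if_zero_simps)

lemma hmult_bvec_bvec: "i < d \<Longrightarrow> j < d \<Longrightarrow> hmult H (bvec i) (bvec j) t = (if t < d then m i j t else 0)"
  by (simp add: hmult_bvec_left) (simp add: bvec_apply if_zero_simps)

lemma hcomult_bvec: "l < d \<Longrightarrow> hcomult H (bvec l) (a,b) = (if a < d \<and> b < d then D l a b else 0)"
  unfolding hcomult_def bvec_def by (simp add: if_zero_simps)

lemma hcounit_bvec: "l < d \<Longrightarrow> hcounit H (bvec l) = ep l"
  unfolding hcounit_def bvec_def by (simp add: if_zero_simps)

lemma hanti_bvec: "l < d \<Longrightarrow> hanti H (bvec l) t = (if t < d then s l t else 0)"
  unfolding hanti_def bvec_def by (simp add: if_zero_simps)

lemma hmult_in_vecs: "hmult H v w \<in> V" by (simp add: hmult_def vecs_def)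

lemma unit_in_vecs: "u \<in> V" using hopf by (simp add: hopf_algebra_def)

lemma hopf_assoc: "v \<in> V \<Longrightarrow> w \<in> V \<Longrightarrow> x \<in> V \<Longrightarrow> hmult H (hmult H v w) x = hmult H v (hmult H w x)"
  using hopf by (simp add: hopf_algebra_def)

lemma hopf_unit: "v \<in> V \<Longrightarrow> hmult H u v = v \<and> hmult H v u = v"
  using hopf by (simp add: hopf_algebra_def)

lemma hopf_coassoc: "v \<in> V \<Longrightarrow> (\<lambda>(a, b, c). \<Sum>i<d. hcomult H v (i, c) * hcomult H (bvec i) (a, b))
      = (\<lambda>(a, b, c). \<Sum>j<d. hcomult H v (a, j) * hcomult H (bvec j) (b, c))"
  using hopf by (simp add: hopf_algebra_def)

lemma hopf_counit: "v \<in> V \<Longrightarrow> (\<lambda>a. \<Sum>i<d. hcounit H (bvec i) * hcomult H v (i, a)) = v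
      \<and> (\<lambda>a. \<Sum>j<d. hcomult H v (a, j) * hcounit H (bvec j)) = v"
  using hopf by (simp add: hopf_algebra_def)

lemma hopf_comult_mult: "v \<in> V \<Longrightarrow> w \<in> V \<Longrightarrow> hcomult H (hmult H v w) = tmult H (hcomult H v) (hcomult H w)"
  using hopf by (simp add: hopf_algebra_def)

lemma hopf_comult_unit: "hcomult H u = tens_prod u u"
  using hopf by (simp add: hopf_algebra_def)

lemma hopf_counit_mult: "v \<in> V \<Longrightarrow> w \<in> V \<Longrightarrow> hcounit H (hmult H v w) = hcounit H v * hcounit H w"
  using hopf by (simp add: hopf_algebra_def)

lemma hopf_counit_unit: "hcounit H u = 1"
  using hopf by (simp add: hopf_algebra_def)

lemma hopf_antipode: "v \<in> V \<Longrightarrow>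
        vsum (\<lambda>(i, j). smul (hcomult H v (i, j)) (hmult H (hanti H (bvec i)) (bvec j)))
             ({..<d} \<times> {..<d}) = smul (hcounit H v) u
      \<and> vsum (\<lambda>(i, j). smul (hcomult H v (i, j)) (hmult H (bvec i) (hanti H (bvec j))))
             ({..<d} \<times> {..<d}) = smul (hcounit H v) u"
  using hopf by (simp add: hopf_algebra_def)

lemma unit_outside: "t \<ge> d \<Longrightarrow> u t = 0" using unit_in_vecs by (simp add: vecs_def)

lemma mu_assoc: "i<d \<Longrightarrow> j<d \<Longrightarrow> k<d \<Longrightarrow> t<d \<Longrightarrow> (\<Sum>r<d. m i j r * m r k t) = (\<Sum>r<d. m j k r * m i r t)"
proof -
  assume h: "i<d" "j<d" "k<d" "t<d"
  have "hmult H (hmult H (bvec i) (bvec j)) (bvec k) t = hmult H (bvec i) (hmult H (bvec j) (bvec k)) t"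
    using h by (simp add: hopf_assoc bvec_in_vecs hmult_in_vecs)
  then show ?thesis using h by (simp add: hmult_bvec_right hmult_bvec_left hmult_bvec_bvec bvec_apply if_zero_simps cong: if_cong)
qed

lemma mu_unit_left: "j<d \<Longrightarrow> t<d \<Longrightarrow> (\<Sum>r<d. u r * m r j t) = (if j = t then 1 else 0)"
proof -
  assume h: "j<d" "t<d"
  have "hmult H u (bvec j) t = bvec j t" using hopf_unit[OF bvec_in_vecs[OF h(1)]] by simp
  then show ?thesis using h by (simp add: hmult_bvec_right bvec_apply eq_commute)
qed

lemma mu_unit_right: "j<d \<Longrightarrow> t<d \<Longrightarrow> (\<Sum>r<d. u r * m j r t) = (if j = t then 1 else 0)"
proof -
  assume h: "j<d" "t<d"
  have "hmult H (bvec j) u t = bvec j t" using hopf_unit[OF bvec_in_vecs[OF h(1)]] by simp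
  then show ?thesis using h by (simp add: hmult_bvec_left bvec_apply eq_commute)
qed

lemma delta_coassoc: "l<d \<Longrightarrow> a<d \<Longrightarrow> b<d \<Longrightarrow> c<d \<Longrightarrow> (\<Sum>i<d. D l i c * D i a b) = (\<Sum>j<d. D l a j * D j b c)"
proof -
  assume h: "l<d" "a<d" "b<d" "c<d"
  from fun_cong[OF hopf_coassoc[OF bvec_in_vecs[OF h(1)]], of "(a,b,c)"]
  show ?thesis using h by (simp add: hcomult_bvec)
qed

lemma delta_counit_left: "l<d \<Longrightarrow> a<d \<Longrightarrow> (\<Sum>i<d. ep i * D l i a) = (if l = a then 1 else 0)"
proof -
  assume h: "l<d" "a<d"
  from fun_cong[OF conjunct1[OF hopf_counit[OF bvec_in_vecs[OF h(1)]]], of a]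
  show ?thesis using h by (simp add: hcomult_bvec hcounit_bvec bvec_apply eq_commute)
qed

lemma delta_counit_right: "l<d \<Longrightarrow> a<d \<Longrightarrow> (\<Sum>j<d. D l a j * ep j) = (if l = a then 1 else 0)"
proof -
  assume h: "l<d" "a<d"
  from fun_cong[OF conjunct2[OF hopf_counit[OF bvec_in_vecs[OF h(1)]]], of a]
  show ?thesis using h by (simp add: hcomult_bvec hcounit_bvec bvec_apply eq_commute)
qed

lemma delta_mu: "i<d \<Longrightarrow> j<d \<Longrightarrow> a<d \<Longrightarrow> b<d \<Longrightarrow>
  (\<Sum>r<d. m i j r * D r a b) = (\<Sum>i1<d. \<Sum>j1<d. \<Sum>i2<d. \<Sum>j2<d. D i i1 j1 * D j i2 j2 * m i1 i2 a * m j1 j2 b)"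
proof -
  assume h: "i<d" "j<d" "a<d" "b<d"
  from fun_cong[OF hopf_comult_mult[OF bvec_in_vecs[OF h(1)] bvec_in_vecs[OF h(2)]], of "(a,b)"]
  show ?thesis using h by (simp add: hcomult_bvec hmult_bvec_bvec hcomult_def tmult_def bvec_apply if_zero_simps)
qed

lemma delta_unit: "a<d \<Longrightarrow> b<d \<Longrightarrow> (\<Sum>r<d. u r * D r a b) = u a * u b"
proof -
  assume h: "a<d" "b<d"
  from fun_cong[OF hopf_comult_unit, of "(a,b)"]
  show ?thesis using h by (simp add: hcomult_def tens_prod_def)
qed

lemma eps_mu: "i<d \<Longrightarrow> j<d \<Longrightarrow> (\<Sum>r<d. m i j r * ep r) = ep i * ep j"
proof -
  assume h: "i<d" "j<d"
  from hopf_counit_mult[OF bvec_in_vecs[OF h(1)] bvec_in_vecs[OF h(2)]]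
  show ?thesis using h by (simp add: hcounit_bvec hmult_bvec_bvec hcounit_def bvec_apply if_zero_simps)
qed

lemma eps_unit: "(\<Sum>r<d. u r * ep r) = 1"
  using hopf_counit_unit by (simp add: hcounit_def)

lemma anti_left: "l<d \<Longrightarrow> t<d \<Longrightarrow> (\<Sum>i<d. \<Sum>j<d. D l i j * (\<Sum>r<d. s i r * m r j t)) = ep l * u t"
proof -
  assume h: "l<d" "t<d"
  from fun_cong[OF conjunct1[OF hopf_antipode[OF bvec_in_vecs[OF h(1)]]], of t]
  show ?thesis using h by (simp add: vsum_def smul_def sum_Times hcomult_bvec hcounit_bvec hmult_bvec_right hanti_bvec cong: if_cong)
qed

lemma anti_right: "l<d \<Longrightarrow> t<d \<Longrightarrow> (\<Sum>i<d. \<Sum>j<d. D l i j * (\<Sum>r<d. m i r t * s j r)) = ep l * u t"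
proof -
  assume h: "l<d" "t<d"
  from fun_cong[OF conjunct2[OF hopf_antipode[OF bvec_in_vecs[OF h(1)]]], of t]
  show ?thesis using h by (simp add: vsum_def smul_def sum_Times hcomult_bvec hcounit_bvec hmult_bvec_left hanti_bvec mult_ac cong: if_cong)
qed

sublocale co: coalg_struct "{..<d}" D ep
  by unfold_locales (auto simp: delta_coassoc delta_counit_left delta_counit_right)

sublocale al: alg_struct "{..<d}" m u
  by unfold_locales (auto simp: mu_assoc mu_unit_left mu_unit_right)

lemma vecs_outside: "x \<in> V \<Longrightarrow> t \<ge> d \<Longrightarrow> x t = 0" by (simp add: vecs_def)

lemma hmult_eq_amult: "hmult H x y = (\<lambda>t. if t < d then al.amult x y t else 0)"
  by (simp add: hmult_def al.amult_def fun_eq_iff)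

lemma hmult_amult: "t < d \<Longrightarrow> hmult H x y t = al.amult x y t"
  by (simp add: hmult_eq_amult)

lemma hcomult_eq: "hcomult H x (a,b) = (if a < d \<and> b < d then (\<Sum>l<d. x l * D l a b) else 0)"
  by (simp add: hcomult_def)

lemma hanti_in_vecs: "hanti H x \<in> V" by (simp add: vecs_def hanti_def)

lemma hcomult_supp: "hcomult H x (a,b) \<noteq> 0 \<Longrightarrow> a < d \<and> b < d"
  by (auto simp: hcomult_eq split: if_splits)

lemma hmult_addL: "hmult H (addv x y) z = addv (hmult H x z) (hmult H y z)"
  by (simp add: hmult_def addv_def fun_eq_iff sum.distrib algebra_simps)

lemma hmult_addR: "hmult H z (addv x y) = addv (hmult H z x) (hmult H z y)"
  by (simp add: hmult_def addv_def fun_eq_iff sum.distrib algebra_simps)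

lemma hmult_smulL: "hmult H (smul c x) z = smul c (hmult H x z)"
  by (simp add: hmult_def smul_def fun_eq_iff sum_distrib_left algebra_simps)

lemma hmult_smulR: "hmult H z (smul c x) = smul c (hmult H z x)"
  by (simp add: hmult_def smul_def fun_eq_iff sum_distrib_left algebra_simps)

lemma hanti_add: "hanti H (addv x y) = addv (hanti H x) (hanti H y)"
  by (simp add: hanti_def addv_def fun_eq_iff sum.distrib algebra_simps)

lemma hanti_smul: "hanti H (smul c x) = smul c (hanti H x)"
  by (simp add: hanti_def smul_def fun_eq_iff sum_distrib_left algebra_simps)


lemma hcomult_add: "hcomult H (addv x y) = addv (hcomult H x) (hcomult H y)"
  by (simp add: hcomult_def addv_def fun_eq_iff sum.distrib algebra_simps)

lemma hcomult_smul: "hcomult H (smul c x) = smul c (hcomult H x)"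
  by (simp add: hcomult_def smul_def fun_eq_iff sum_distrib_left algebra_simps)

lemma hcomult_zv: "hcomult H zv = zv" by (simp add: hcomult_def zv_def fun_eq_iff)

lemma addv_in_vecs: "x \<in> V \<Longrightarrow> y \<in> V \<Longrightarrow> addv x y \<in> V" by (simp add: vecs_def addv_def)

lemma smul_in_vecs: "x \<in> V \<Longrightarrow> smul c x \<in> V" by (simp add: vecs_def smul_def)

lemma zv_in_vecs: "zv \<in> V" by (simp add: vecs_def zv_def)

lemma lin_closed_vecs: "lin_closed V" by (auto intro!: lin_closedI addv_in_vecs smul_in_vecs zv_in_vecs)

lemma delta_mu_sum: assumes "i<d" "j<d"
  shows "(\<Sum>i1<d. \<Sum>j1<d. \<Sum>i2<d. \<Sum>j2<d. D i i1 j1 * D j i2 j2 * (\<Sum>a<d. \<Sum>b<d. m i1 i2 a * m j1 j2 b * Y a b))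
     = (\<Sum>r<d. m i j r * (\<Sum>a<d. \<Sum>b<d. D r a b * Y a b))"
proof -
  have "(\<Sum>i1<d. \<Sum>j1<d. \<Sum>i2<d. \<Sum>j2<d. D i i1 j1 * D j i2 j2 * (\<Sum>a<d. \<Sum>b<d. m i1 i2 a * m j1 j2 b * Y a b))
     = (\<Sum>i1<d. \<Sum>j1<d. \<Sum>i2<d. \<Sum>j2<d. \<Sum>a<d. \<Sum>b<d. D i i1 j1 * D j i2 j2 * m i1 i2 a * m j1 j2 b * Y a b)"
    by (simp add: sum_distrib_left mult_ac)
  also have "\<dots> = (\<Sum>a<d. \<Sum>b<d. \<Sum>i1<d. \<Sum>j1<d. \<Sum>i2<d. \<Sum>j2<d. D i i1 j1 * D j i2 j2 * m i1 i2 a * m j1 j2 b * Y a b)"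
    by (rule sum_swap_pairs6)
  also have "\<dots> = (\<Sum>a<d. \<Sum>b<d. (\<Sum>i1<d. \<Sum>j1<d. \<Sum>i2<d. \<Sum>j2<d. D i i1 j1 * D j i2 j2 * m i1 i2 a * m j1 j2 b) * Y a b)"
    by (simp add: sum_distrib_right)
  also have "\<dots> = (\<Sum>a<d. \<Sum>b<d. (\<Sum>r<d. m i j r * D r a b) * Y a b)"
    using assms by (simp add: delta_mu)
  also have "\<dots> = (\<Sum>a<d. \<Sum>b<d. \<Sum>r<d. m i j r * (D r a b * Y a b))"
    by (simp add: sum_distrib_right mult.assoc)
  also have "\<dots> = (\<Sum>r<d. \<Sum>a<d. \<Sum>b<d. m i j r * (D r a b * Y a b))"
    by (rule sum_rotate3)
  also have "\<dots> = (\<Sum>r<d. m i j r * (\<Sum>a<d. \<Sum>b<d. D r a b * Y a b))"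
    by (simp add: sum_distrib_left)
  finally show ?thesis .
qed

lemma basis_eq_bvec: "al.basis = bvec" by (simp add: al.basis_def bvec_def fun_eq_iff)

sublocale al2: alg_struct "{..<d}\<times>{..<d}" "sc_tensor m" "fun_tensor u"
  by (rule alg_struct_tensor[OF al.alg_struct_axioms])

lemma amult2_expand: "al2.amult v w (a,b) = (\<Sum>p1<d. \<Sum>p2<d. \<Sum>q1<d. \<Sum>q2<d. v (p1,p2) * w (q1,q2) * (m p1 q1 a * m p2 q2 b))"
  unfolding al2.amult_def by (simp add: sum_Times sc_tensor_def)

text \<open>The convolution algebras \<open>Hom(H \<otimes> H, H)\<close> and \<open>Hom(H, H \<otimes> H)\<close>. In the first, \<open>m\<close> has the
  two inverses \<open>S \<circ> m\<close> and \<open>m \<circ> (S \<otimes> S) \<circ> \<tau>\<close>; in the second, \<open>\<Delta>\<close> has the two inverses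
  \<open>\<Delta> \<circ> S\<close> and \<open>\<tau> \<circ> (S \<otimes> S) \<circ> \<Delta>\<close>. Uniqueness of inverses makes \<open>S\<close> an anti-homomorphism of
  algebras and of coalgebras.\<close>

sublocale mconv: convolution "{..<d}\<times>{..<d}" "sc_tensor D" "fun_tensor ep" "{..<d}" m u
  by (intro convolution.intro coalg_struct_tensor co.coalg_struct_axioms al.alg_struct_axioms)

sublocale dconv: convolution "{..<d}" D ep "{..<d}\<times>{..<d}" "sc_tensor m" "fun_tensor u"
  by (intro convolution.intro co.coalg_struct_axioms al2.alg_struct_axioms)

definition mult_pair :: "nat \<times> nat \<Rightarrow> nat \<Rightarrow> 'k" where
  "mult_pair p = m (fst p) (snd p)"

definition anti_of_mult :: "nat \<times> nat \<Rightarrow> nat \<Rightarrow> 'k" where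
  "anti_of_mult p t = (\<Sum>r<d. m (fst p) (snd p) r * s r t)"

definition mult_of_antis :: "nat \<times> nat \<Rightarrow> nat \<Rightarrow> 'k" where
  "mult_of_antis p t = (\<Sum>a<d. \<Sum>b<d. s (snd p) a * s (fst p) b * m a b t)"

lemma convol_anti_of_mult:
  assumes "l \<in> {..<d}\<times>{..<d}" and t: "t < d"
  shows "mconv.convol anti_of_mult mult_pair l t = mconv.convol_unit l t"
proof -
  obtain i j where lij: "l = (i,j)" "i<d" "j<d" using assms(1) by auto
  have amult_eq: "al.amult (anti_of_mult (p1,p2)) (mult_pair (q1,q2)) t
      = (\<Sum>r<d. \<Sum>y<d. m p1 p2 r * m q1 q2 y * (\<Sum>x<d. s r x * m x y t))" for p1 p2 q1 q2
  proof -
    have "al.amult (anti_of_mult (p1,p2)) (mult_pair (q1,q2)) t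
        = (\<Sum>x<d. \<Sum>y<d. \<Sum>r<d. m p1 p2 r * m q1 q2 y * (s r x * m x y t))"
      unfolding al.amult_def anti_of_mult_def mult_pair_def by (simp add: sum_distrib_left sum_distrib_right mult_ac)
    also have "\<dots> = (\<Sum>r<d. \<Sum>y<d. \<Sum>x<d. m p1 p2 r * m q1 q2 y * (s r x * m x y t))"
      by (subst sum_rotate3) (rule sum.cong[OF refl], rule sum.swap)
    finally show ?thesis by (simp add: sum_distrib_left)
  qed
  have "mconv.convol anti_of_mult mult_pair l t
      = (\<Sum>p1<d. \<Sum>q1<d. \<Sum>p2<d. \<Sum>q2<d. D i p1 q1 * D j p2 q2 * al.amult (anti_of_mult (p1,p2)) (mult_pair (q1,q2)) t)"
    unfolding mconv.convol_def lij by (simp add: sum_Times sc_tensor_def) (rule sum_swap_mid)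
  also have "\<dots> = (\<Sum>z<d. m i j z * (\<Sum>a<d. \<Sum>b<d. D z a b * (\<Sum>x<d. s a x * m x b t)))"
    unfolding amult_eq by (rule delta_mu_sum[OF lij(2,3)])
  also have "\<dots> = (\<Sum>z<d. m i j z * ep z) * u t"
    using t by (simp add: anti_left sum_distrib_right mult.assoc)
  also have "\<dots> = mconv.convol_unit l t"
    using lij by (simp add: eps_mu mconv.convol_unit_def fun_tensor_def)
  finally show ?thesis .
qed

lemma amult_antipode_inside:
  assumes j: "j < d" and t: "t < d"
  shows "(\<Sum>p<d. \<Sum>q<d. D j p q * al.amult v (al.amult (al.amult (bvec p) (s q)) w) t) = ep j * al.amult v w t"
proof -
  have antipode: "(\<Sum>p<d. \<Sum>q<d. D j p q * al.amult (bvec p) (s q) y) = ep j * u y" if "y \<in> {..<d}" for y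
    using that j anti_right[of j y] by (simp add: basis_eq_bvec[symmetric] al.amult_basis_left mult.commute)
  have "(\<Sum>p<d. \<Sum>q<d. D j p q * al.amult v (al.amult (al.amult (bvec p) (s q)) w) t)
      = al.amult v (\<lambda>x. al.amult (\<lambda>y. \<Sum>p<d. \<Sum>q<d. D j p q * al.amult (bvec p) (s q) y) w x) t"
    by (simp only: al.amult_sum2_right[symmetric] al.amult_sum2_left)
  also have "\<dots> = al.amult v (\<lambda>x. al.amult (\<lambda>y. ep j * u y) w x) t"
    by (intro al.amult_cong refl) (simp add: antipode)
  also have "\<dots> = al.amult v (\<lambda>x. ep j * w x) t"
    by (rule al.amult_cong[OF refl]) (simp add: al.amult_scale_left al.amult_unit_left)
  also have "\<dots> = ep j * al.amult v w t"
    by (rule al.amult_scale_right)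
  finally show ?thesis .
qed

lemma convol_mult_of_antis:
  assumes "l \<in> {..<d}\<times>{..<d}" and t: "t < d"
  shows "mconv.convol mult_pair mult_of_antis l t = mconv.convol_unit l t"
proof -
  obtain i j where lij: "l = (i,j)" "i<d" "j<d" using assms(1) by auto
  have amult_eq: "al.amult (mult_pair (p1,p2)) (mult_of_antis (q1,q2)) t
      = al.amult (bvec p1) (al.amult (al.amult (bvec p2) (s q2)) (s q1)) t" if "p1<d" "p2<d" for p1 p2 q1 q2
  proof -
    have "al.amult (mult_pair (p1,p2)) (mult_of_antis (q1,q2)) t
        = al.amult (al.amult (bvec p1) (bvec p2)) (al.amult (s q2) (s q1)) t"
    proof (intro al.amult_cong)
      show "mult_pair (p1,p2) x = al.amult (bvec p1) (bvec p2) x" if "x \<in> {..<d}" for x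
        using that \<open>p1<d\<close> \<open>p2<d\<close> by (simp add: mult_pair_def basis_eq_bvec[symmetric] al.amult_basis_basis)
      show "mult_of_antis (q1,q2) x = al.amult (s q2) (s q1) x" for x
        by (simp add: mult_of_antis_def al.amult_def)
    qed
    also have "\<dots> = al.amult (bvec p1) (al.amult (bvec p2) (al.amult (s q2) (s q1))) t"
      using t by (simp add: al.amult_assoc)
    also have "\<dots> = al.amult (bvec p1) (al.amult (al.amult (bvec p2) (s q2)) (s q1)) t"
      by (rule al.amult_cong) (simp_all add: al.amult_assoc)
    finally show ?thesis .
  qed
  have "mconv.convol mult_pair mult_of_antis l t
      = (\<Sum>p1<d. \<Sum>q1<d. \<Sum>p2<d. \<Sum>q2<d. D i p1 q1 * (D j p2 q2 * al.amult (mult_pair (p1,p2)) (mult_of_antis (q1,q2)) t))"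
    unfolding mconv.convol_def lij by (simp add: sum_Times sc_tensor_def mult.assoc) (rule sum_swap_mid)
  also have "\<dots> = (\<Sum>p1<d. \<Sum>q1<d. D i p1 q1 * (\<Sum>p2<d. \<Sum>q2<d. D j p2 q2 * al.amult (mult_pair (p1,p2)) (mult_of_antis (q1,q2)) t))"
    by (simp add: sum_distrib_left)
  also have "\<dots> = ep j * (\<Sum>p1<d. \<Sum>q1<d. D i p1 q1 * al.amult (bvec p1) (s q1) t)"
    using lij t by (simp add: amult_eq amult_antipode_inside sum_distrib_left mult_ac)
  also have "\<dots> = mconv.convol_unit l t"
    using lij t anti_right[of i t]
    by (simp add: basis_eq_bvec[symmetric] al.amult_basis_left mconv.convol_unit_def fun_tensor_def mult_ac)
  finally show ?thesis .
qed

lemma anti_mu: assumes "i<d" "j<d" "t<d"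
  shows "(\<Sum>r<d. m i j r * s r t) = (\<Sum>a<d. \<Sum>b<d. s j a * s i b * m a b t)"
  using mconv.convol_inverse_unique[of anti_of_mult mult_pair mult_of_antis "(i,j)" t]
    convol_anti_of_mult convol_mult_of_antis assms
  by (simp add: anti_of_mult_def mult_of_antis_def)

lemma anti_right_swapped: "l<d \<Longrightarrow> t<d \<Longrightarrow> (\<Sum>i<d. \<Sum>j<d. D l i j * (\<Sum>r<d. s j r * m i r t)) = ep l * u t"
  using anti_right[of l t] by (simp add: mult.commute)

definition delta_pair :: "nat \<Rightarrow> nat \<times> nat \<Rightarrow> 'k" where
  "delta_pair l p = D l (fst p) (snd p)"

definition comult_of_anti :: "nat \<Rightarrow> nat \<times> nat \<Rightarrow> 'k" where
  "comult_of_anti l p = (\<Sum>r<d. s l r * D r (fst p) (snd p))"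

definition antis_of_comult :: "nat \<Rightarrow> nat \<times> nat \<Rightarrow> 'k" where
  "antis_of_comult l p = (\<Sum>a<d. \<Sum>b<d. D l a b * s b (fst p) * s a (snd p))"

definition mult_anti :: "nat \<Rightarrow> nat \<Rightarrow> nat \<Rightarrow> 'k" where
  "mult_anti p q x = (\<Sum>c<d. s q c * m p c x)"

lemma convol_comult_of_anti:
  assumes l: "l < d" and "t \<in> {..<d}\<times>{..<d}"
  shows "dconv.convol comult_of_anti delta_pair l t = dconv.convol_unit l t"
proof -
  obtain x y where t: "t = (x,y)" "x<d" "y<d" using assms(2) by auto
  have delta_delta: "al2.amult (delta_pair r) (delta_pair j) (x,y) = (\<Sum>z<d. m r j z * D z x y)"
    if "r<d" "j<d" for r j
    using that t delta_mu[of r j x y] by (simp add: amult2_expand delta_pair_def mult_ac)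
  have "comult_of_anti i = (\<lambda>p. \<Sum>r<d. s i r * delta_pair r p)" for i
    by (simp add: fun_eq_iff comult_of_anti_def delta_pair_def)
  then have amult_eq: "al2.amult (comult_of_anti i) (delta_pair j) (x,y) = (\<Sum>r<d. s i r * (\<Sum>z<d. m r j z * D z x y))"
    if "j<d" for i j
    using that by (simp add: al2.amult_sum_left delta_delta)
  have "dconv.convol comult_of_anti delta_pair l t
      = (\<Sum>i<d. \<Sum>j<d. \<Sum>r<d. \<Sum>z<d. D l i j * (s i r * (m r j z * D z x y)))"
    unfolding dconv.convol_def t by (simp add: amult_eq sum_distrib_left)
  also have "\<dots> = (\<Sum>z<d. (\<Sum>i<d. \<Sum>j<d. D l i j * (\<Sum>r<d. s i r * m r j z)) * D z x y)"
    by (subst sum_rotate4) (simp add: sum_distrib_left sum_distrib_right mult.assoc)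
  also have "\<dots> = (\<Sum>z<d. ep l * u z * D z x y)"
    using l by (simp add: anti_left)
  also have "\<dots> = ep l * (\<Sum>z<d. u z * D z x y)"
    by (simp add: sum_distrib_left mult.assoc)
  also have "\<dots> = dconv.convol_unit l t"
    using t by (simp add: delta_unit dconv.convol_unit_def fun_tensor_def)
  finally show ?thesis .
qed

lemma mult_anti_coassoc:
  assumes k: "k < d" and y: "y < d"
  shows "(\<Sum>p2<d. \<Sum>j<d. D k p2 j * (\<Sum>a<d. \<Sum>b<d. D j a b * (mult_anti p1 b x * mult_anti p2 a y)))
    = mult_anti p1 k x * u y"
proof -
  have "(\<Sum>p2<d. \<Sum>j<d. D k p2 j * (\<Sum>a<d. \<Sum>b<d. D j a b * (mult_anti p1 b x * mult_anti p2 a y)))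
      = (\<Sum>w<d. \<Sum>b<d. D k w b * (mult_anti p1 b x * (\<Sum>p2<d. \<Sum>a<d. D w p2 a * (\<Sum>r<d. m p2 r y * s a r))))"
    using k by (subst co.coassoc_sum[symmetric]) (simp_all add: mult_anti_def sum_distrib_left mult_ac)
  also have "\<dots> = (\<Sum>w<d. \<Sum>b<d. D k w b * (ep w * (mult_anti p1 b x * u y)))"
    using y by (intro sum.cong refl) (simp add: anti_right_swapped mult_ac)
  also have "\<dots> = mult_anti p1 k x * u y"
    using k by (simp add: co.counit_sum_left)
  finally show ?thesis .
qed

lemma convol_antis_of_comult:
  assumes l: "l < d" and "t \<in> {..<d}\<times>{..<d}"
  shows "dconv.convol delta_pair antis_of_comult l t = dconv.convol_unit l t"
proof -
  obtain x y where t: "t = (x,y)" "x<d" "y<d" using assms(2) by auto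
  have amult_eq: "al2.amult (delta_pair i) (antis_of_comult j) (x,y)
      = (\<Sum>p1<d. \<Sum>p2<d. D i p1 p2 * (\<Sum>a<d. \<Sum>b<d. D j a b * (mult_anti p1 b x * mult_anti p2 a y)))" for i j
  proof -
    have "al2.amult (delta_pair i) (antis_of_comult j) (x,y) = (\<Sum>p1<d. \<Sum>p2<d. \<Sum>q1<d. \<Sum>q2<d. \<Sum>a<d. \<Sum>b<d.
        D i p1 p2 * (D j a b * (s b q1 * m p1 q1 x * (s a q2 * m p2 q2 y))))"
      by (simp add: amult2_expand delta_pair_def antis_of_comult_def sum_distrib_left sum_distrib_right mult_ac)
    also have "\<dots> = (\<Sum>p1<d. \<Sum>p2<d. \<Sum>a<d. \<Sum>b<d. \<Sum>q2<d. \<Sum>q1<d.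
        D i p1 p2 * (D j a b * (s b q1 * m p1 q1 x * (s a q2 * m p2 q2 y))))"
      by (intro sum.cong refl trans[OF sum_swap_pairs] sum.swap)
    finally show ?thesis
      by (simp add: mult_anti_def sum_distrib_left sum_distrib_right sum_product)
  qed
  have "dconv.convol delta_pair antis_of_comult l t
      = (\<Sum>p1<d. \<Sum>k<d. D l p1 k * (\<Sum>p2<d. \<Sum>j<d. D k p2 j * (\<Sum>a<d. \<Sum>b<d. D j a b * (mult_anti p1 b x * mult_anti p2 a y))))"
    unfolding dconv.convol_def t amult_eq by (rule co.coassoc_sum) (simp add: l)
  also have "\<dots> = (\<Sum>p1<d. \<Sum>k<d. D l p1 k * (mult_anti p1 k x * u y))"
    using t by (simp add: mult_anti_coassoc)
  also have "\<dots> = (\<Sum>p1<d. \<Sum>k<d. D l p1 k * (\<Sum>r<d. m p1 r x * s k r)) * u y"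
    by (simp add: mult_anti_def sum_distrib_left sum_distrib_right mult_ac)
  also have "\<dots> = dconv.convol_unit l t"
    using t l by (simp add: anti_right_swapped dconv.convol_unit_def fun_tensor_def mult_ac)
  finally show ?thesis .
qed

lemma delta_anti: assumes "l<d" "a<d" "b<d"
  shows "(\<Sum>r<d. s l r * D r a b) = (\<Sum>p<d. \<Sum>q<d. D l p q * s q a * s p b)"
  using dconv.convol_inverse_unique[of comult_of_anti delta_pair antis_of_comult l "(a,b)"]
    convol_comult_of_anti convol_antis_of_comult assms
  by (simp add: comult_of_anti_def antis_of_comult_def mult_ac)


lemma hanti_hmult: assumes x: "x \<in> V" and y: "y \<in> V"
  shows "hanti H (hmult H x y) = hmult H (hanti H y) (hanti H x)"
proof (rule ext)
  fix t show "hanti H (hmult H x y) t = hmult H (hanti H y) (hanti H x) t"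
  proof (cases "t < d")
    case False then show ?thesis by (simp add: hanti_def hmult_def)
  next
    case t: True
    have "hanti H (hmult H x y) t = (\<Sum>l<d. (\<Sum>i<d. \<Sum>j<d. x i * y j * m i j l) * s l t)"
      using t by (simp add: hanti_def hmult_def)
    also have "\<dots> = (\<Sum>l<d. \<Sum>i<d. \<Sum>j<d. x i * y j * (m i j l * s l t))"
      by (simp add: sum_distrib_right mult.assoc)
    also have "\<dots> = (\<Sum>i<d. \<Sum>j<d. \<Sum>l<d. x i * y j * (m i j l * s l t))"
      by (rule sum_rotate3[symmetric])
    also have "\<dots> = (\<Sum>i<d. \<Sum>j<d. x i * y j * (\<Sum>l<d. m i j l * s l t))"
      by (simp add: sum_distrib_left)
    also have "\<dots> = (\<Sum>i<d. \<Sum>j<d. x i * y j * (\<Sum>a<d. \<Sum>b<d. s j a * s i b * m a b t))"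
      using t by (simp add: anti_mu)
    also have "\<dots> = (\<Sum>i<d. \<Sum>j<d. \<Sum>a<d. \<Sum>b<d. x i * y j * (s j a * s i b * m a b t))"
      by (simp add: sum_distrib_left)
    also have "\<dots> = (\<Sum>a<d. \<Sum>b<d. \<Sum>j<d. \<Sum>i<d. x i * y j * (s j a * s i b * m a b t))"
      by (rule sum_swap_pairs_rev)
    also have "\<dots> = hmult H (hanti H y) (hanti H x) t"
      using t by (simp add: hmult_def hanti_def sum_distrib_left sum_distrib_right mult_ac)
    finally show ?thesis .
  qed
qed

definition tens_map :: "((nat \<Rightarrow> 'k) \<Rightarrow> nat \<Rightarrow> 'k) \<Rightarrow> ((nat \<Rightarrow> 'k) \<Rightarrow> nat \<Rightarrow> 'k) \<Rightarrow> (nat \<times> nat \<Rightarrow> 'k) \<Rightarrow> nat \<times> nat \<Rightarrow> 'k" where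
  "tens_map f g T = (\<lambda>(a,b). \<Sum>c<d. \<Sum>e<d. T (c,e) * f (bvec c) a * g (bvec e) b)"

definition basis_linear :: "((nat \<Rightarrow> 'k) \<Rightarrow> nat \<Rightarrow> 'k) \<Rightarrow> bool" where
  "basis_linear f \<longleftrightarrow> (\<forall>x\<in>V. f x = (\<lambda>a. \<Sum>c<d. x c * f (bvec c) a))"

lemma tens_map_tens_prod: assumes f: "basis_linear f" and g: "basis_linear g" and x: "x \<in> V" and y: "y \<in> V"
  shows "tens_map f g (tens_prod x y) = tens_prod (f x) (g y)"
proof (rule ext, clarify)
  fix a b
  have "tens_map f g (tens_prod x y) (a,b) = (\<Sum>c<d. x c * f (bvec c) a) * (\<Sum>e<d. y e * g (bvec e) b)"
    by (simp add: tens_map_def tens_prod_def sum_product mult_ac)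
  also have "\<dots> = f x a * g y b"
    using f g x y unfolding basis_linear_def by metis
  finally show "tens_map f g (tens_prod x y) (a,b) = tens_prod (f x) (g y) (a,b)"
    by (simp add: tens_prod_def)
qed

lemma tens_map_add: "tens_map f g (addv T T') = addv (tens_map f g T) (tens_map f g T')"
  by (simp add: tens_map_def addv_def fun_eq_iff sum.distrib algebra_simps split: prod.split)

lemma tens_map_smul: "tens_map f g (smul c T) = smul c (tens_map f g T)"
  by (simp add: tens_map_def smul_def fun_eq_iff sum_distrib_left algebra_simps split: prod.split)

lemma tens_map_zv: "tens_map f g zv = zv"
  by (simp add: tens_map_def zv_def fun_eq_iff split: prod.split)

lemma tens_map_sp:
  assumes A: "A \<subseteq> V" and B: "B \<subseteq> V" and f: "basis_linear f" and g: "basis_linear g"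
    and fA: "f ` A \<subseteq> A'" and gB: "g ` B \<subseteq> B'" and T: "T \<in> tens_sp A B"
  shows "tens_map f g T \<in> tens_sp A' B'"
proof -
  from T have "T \<in> kspan {tens_prod a b | a b. a \<in> A \<and> b \<in> B}" by (simp add: tens_sp_def)
  then show ?thesis
  proof (induction rule: kspan.induct)
    case kspan_zero then show ?case by (simp add: tens_map_zv lin_closed_zv[OF lin_closed_tens_sp])
  next
    case (kspan_base v)
    then obtain a b where v: "v = tens_prod a b" "a \<in> A" "b \<in> B" by blast
    then have "tens_map f g v = tens_prod (f a) (g b)" using A B f g by (auto intro: tens_map_tens_prod)
    then show ?case using v fA gB by (auto intro: tens_sp_base)
  next
    case (kspan_add v w) then show ?case by (simp add: tens_map_add lin_closed_add[OF lin_closed_tens_sp])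
  next
    case (kspan_smul v c) then show ?case by (simp add: tens_map_smul lin_closed_smul[OF lin_closed_tens_sp])
  qed
qed

lemma tens_map_sum_sp:
  assumes "A \<subseteq> V" "B \<subseteq> V" "C \<subseteq> V" "E \<subseteq> V" "basis_linear f" "basis_linear g"
    "f ` A \<subseteq> A'" "g ` B \<subseteq> B'" "f ` C \<subseteq> C'" "g ` E \<subseteq> E'"
    and T: "T \<in> sum_sp (tens_sp A B) (tens_sp C E)"
  shows "tens_map f g T \<in> sum_sp (tens_sp A' B') (tens_sp C' E')"
proof -
  obtain T1 T2 where T: "T = addv T1 T2" "T1 \<in> tens_sp A B" "T2 \<in> tens_sp C E"
    using T by (auto simp: sum_sp_def)
  have "tens_map f g T1 \<in> tens_sp A' B'" "tens_map f g T2 \<in> tens_sp C' E'"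
    using assms T by (auto intro: tens_map_sp)
  then show ?thesis unfolding T tens_map_add sum_sp_def by blast
qed

lemma basis_linear_hanti: "basis_linear (hanti H)"
  unfolding basis_linear_def by (auto simp: hanti_def fun_eq_iff bvec_apply if_zero_simps)

lemma basis_linear_id: "basis_linear (\<lambda>x. x)"
  unfolding basis_linear_def by (auto simp: fun_eq_iff bvec_apply if_zero_simps vecs_outside)

lemma hanti_unit: "hanti H u = u"
proof (rule ext)
  fix t show "hanti H u t = u t"
  proof (cases "t < d")
    case False then show ?thesis by (simp add: hanti_def unit_outside)
  next
    case t: True
    define Q where "Q = (\<lambda>i j. \<Sum>r<d. s i r * m r j t)"
    have "(\<Sum>l<d. u l * (\<Sum>i<d. \<Sum>j<d. D l i j * Q i j)) = (\<Sum>l<d. u l * (ep l * u t))"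
      using t by (simp add: anti_left Q_def)
    also have "\<dots> = (\<Sum>l<d. u l * ep l) * u t" by (simp add: sum_distrib_left sum_distrib_right mult_ac)
    also have "\<dots> = u t" using eps_unit by simp
    finally have e1: "(\<Sum>l<d. u l * (\<Sum>i<d. \<Sum>j<d. D l i j * Q i j)) = u t" .
    have "(\<Sum>l<d. u l * (\<Sum>i<d. \<Sum>j<d. D l i j * Q i j)) = (\<Sum>l<d. \<Sum>i<d. \<Sum>j<d. u l * D l i j * Q i j)"
      by (simp add: sum_distrib_left mult_ac)
    also have "\<dots> = (\<Sum>i<d. \<Sum>j<d. \<Sum>l<d. u l * D l i j * Q i j)"
      by (rule sum_rotate3[symmetric])
    also have "\<dots> = (\<Sum>i<d. \<Sum>j<d. (\<Sum>l<d. u l * D l i j) * Q i j)"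
      by (simp add: sum_distrib_right)
    also have "\<dots> = (\<Sum>i<d. \<Sum>j<d. u i * u j * Q i j)"
      by (simp add: delta_unit)
    also have "\<dots> = (\<Sum>i<d. \<Sum>j<d. \<Sum>r<d. u i * s i r * (u j * m r j t))"
      by (simp add: Q_def sum_distrib_left mult_ac)
    also have "\<dots> = (\<Sum>i<d. \<Sum>r<d. \<Sum>j<d. u i * s i r * (u j * m r j t))"
      by (intro sum.cong refl sum.swap)
    also have "\<dots> = (\<Sum>i<d. \<Sum>r<d. u i * s i r * (\<Sum>j<d. u j * m r j t))"
      by (simp add: sum_distrib_left)
    also have "\<dots> = (\<Sum>i<d. \<Sum>r<d. u i * s i r * (if r = t then 1 else 0))"
      using t by (simp add: mu_unit_right)
    also have "\<dots> = (\<Sum>i<d. u i * s i t)"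
      using t by (simp add: if_zero_simps)
    finally show ?thesis using e1 t by (simp add: hanti_def)
  qed
qed


definition tens_pair :: "(nat \<Rightarrow> 'k) \<Rightarrow> (nat \<Rightarrow> 'k) \<Rightarrow> nat \<times> nat \<Rightarrow> 'k" where
  "tens_pair f g = (\<lambda>z. f (fst z) * g (snd z))"

definition comult_coeffs :: "(nat \<Rightarrow> 'k) \<Rightarrow> nat \<times> nat \<Rightarrow> 'k" where
  "comult_coeffs v = (\<lambda>z. \<Sum>r<d. v r * D r (fst z) (snd z))"


lemma amult2_tens_pair: "al2.amult (tens_pair f g) (tens_pair f' g') (a,b) = al.amult f f' a * al.amult g g' b"
proof -
  have "al2.amult (tens_pair f g) (tens_pair f' g') (a,b) = (\<Sum>p1<d. \<Sum>p2<d. \<Sum>q1<d. \<Sum>q2<d. (f p1 * f' q1 * m p1 q1 a) * (g p2 * g' q2 * m p2 q2 b))"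
    by (simp add: amult2_expand tens_pair_def mult_ac)
  also have "\<dots> = al.amult f f' a * al.amult g g' b"
    unfolding al.amult_def by (simp add: sum_product)
  finally show ?thesis .
qed

lemma comult_coeffs_amult: assumes a: "a<d" and b: "b<d"
  shows "(\<Sum>t<d. al.amult v w t * D t a b) = al2.amult (comult_coeffs v) (comult_coeffs w) (a,b)"
proof -
  have "(\<Sum>t<d. al.amult v w t * D t a b) = (\<Sum>t<d. \<Sum>x<d. \<Sum>y<d. v x * w y * (m x y t * D t a b))"
    unfolding al.amult_def by (simp add: sum_distrib_left sum_distrib_right mult_ac)
  also have "\<dots> = (\<Sum>x<d. \<Sum>y<d. \<Sum>t<d. v x * w y * (m x y t * D t a b))"
    by (rule sum_rotate3[symmetric])
  also have "\<dots> = (\<Sum>x<d. \<Sum>y<d. v x * w y * (\<Sum>t<d. m x y t * D t a b))"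
    by (simp add: sum_distrib_left)
  also have "\<dots> = (\<Sum>x<d. \<Sum>y<d. v x * w y * (\<Sum>p1<d. \<Sum>p2<d. \<Sum>q1<d. \<Sum>q2<d. D x p1 p2 * D y q1 q2 * m p1 q1 a * m p2 q2 b))"
    using a b by (simp add: delta_mu)
  also have "\<dots> = (\<Sum>x<d. \<Sum>y<d. \<Sum>p1<d. \<Sum>p2<d. \<Sum>q1<d. \<Sum>q2<d. v x * w y * (D x p1 p2 * D y q1 q2 * m p1 q1 a * m p2 q2 b))"
    by (simp add: sum_distrib_left)
  also have "\<dots> = (\<Sum>p1<d. \<Sum>p2<d. \<Sum>q1<d. \<Sum>q2<d. \<Sum>x<d. \<Sum>y<d. v x * w y * (D x p1 p2 * D y q1 q2 * m p1 q1 a * m p2 q2 b))"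
    by (rule sum_swap_pairs6[symmetric])
  also have "\<dots> = (\<Sum>p1<d. \<Sum>p2<d. \<Sum>q1<d. \<Sum>q2<d. \<Sum>y<d. \<Sum>x<d. v x * w y * (D x p1 p2 * D y q1 q2 * m p1 q1 a * m p2 q2 b))"
    by (intro sum.cong refl sum.swap)
  also have "\<dots> = al2.amult (comult_coeffs v) (comult_coeffs w) (a,b)"
    by (simp add: amult2_expand comult_coeffs_def sum_distrib_left sum_distrib_right mult_ac)
  finally show ?thesis .
qed

lemma amult_regroup: assumes t: "t < d"
  shows "al.amult (al.amult a (al.amult x b)) (al.amult c (al.amult y e)) t = al.amult (al.amult a x) (al.amult (al.amult b c) (al.amult y e)) t"
proof -
  have "al.amult (al.amult a (al.amult x b)) (al.amult c (al.amult y e)) t = al.amult a (al.amult (al.amult x b) (al.amult c (al.amult y e))) t"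
    using t by (simp add: al.amult_assoc)
  also have "\<dots> = al.amult a (al.amult x (al.amult b (al.amult c (al.amult y e)))) t"
    by (rule al.amult_cong[OF refl]) (simp add: al.amult_assoc)
  also have "\<dots> = al.amult a (al.amult x (al.amult (al.amult b c) (al.amult y e))) t"
    by (rule al.amult_cong[OF refl], rule al.amult_cong[OF refl]) (simp add: al.amult_assoc)
  also have "\<dots> = al.amult (al.amult a x) (al.amult (al.amult b c) (al.amult y e)) t"
    using t by (simp add: al.amult_assoc)
  finally show ?thesis .
qed

lemma anti_left_amult: "l<d \<Longrightarrow> t<d \<Longrightarrow> (\<Sum>i<d. \<Sum>j<d. D l i j * al.amult (s i) (bvec j) t) = ep l * u t"
  unfolding basis_eq_bvec[symmetric] by (simp add: al.amult_basis_right anti_left)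

lemma anti_right_amult: "l<d \<Longrightarrow> t<d \<Longrightarrow> (\<Sum>i<d. \<Sum>j<d. D l i j * al.amult (bvec i) (s j) t) = ep l * u t"
  unfolding basis_eq_bvec[symmetric] by (simp add: al.amult_basis_left anti_right_swapped)

lemma delta_bvec: "i<d \<Longrightarrow> p<d \<Longrightarrow> q<d \<Longrightarrow> (\<Sum>r<d. bvec i r * D r p q) = (\<Sum>a<d. \<Sum>b<d. D i a b * (bvec a p * bvec b q))"
  by (simp add: bvec_apply if_zero_simps)

lemma tmult_addL: "tmult H (addv T1 T2) T = addv (tmult H T1 T) (tmult H T2 T)"
  by (simp add: tmult_def addv_def fun_eq_iff sum.distrib algebra_simps split: prod.split)

lemma tmult_addR: "tmult H T (addv T1 T2) = addv (tmult H T T1) (tmult H T T2)"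
  by (simp add: tmult_def addv_def fun_eq_iff sum.distrib algebra_simps split: prod.split)

lemma tmult_smulL: "tmult H (smul c T1) T = smul c (tmult H T1 T)"
  by (simp add: tmult_def smul_def fun_eq_iff sum_distrib_left algebra_simps split: prod.split)

lemma tmult_smulR: "tmult H T (smul c T1) = smul c (tmult H T T1)"
  by (simp add: tmult_def smul_def fun_eq_iff sum_distrib_left algebra_simps split: prod.split)

lemma tmult_zvL: "tmult H zv T = zv" by (simp add: tmult_def zv_def fun_eq_iff split: prod.split)

lemma tmult_zvR: "tmult H T zv = zv" by (simp add: tmult_def zv_def fun_eq_iff split: prod.split)

lemma hmult_basis_expand: "hmult H x y a = (\<Sum>i<d. \<Sum>j<d. x i * y j * hmult H (bvec i) (bvec j) a)"
proof (cases "a < d")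
  case True then show ?thesis by (simp add: hmult_bvec_bvec) (simp add: hmult_def)
next
  case False then show ?thesis by (simp add: hmult_def)
qed

lemma tmult_tens_prod: assumes "a \<in> V" "b \<in> V" "c \<in> V" "e \<in> V"
  shows "tmult H (tens_prod a b) (tens_prod c e) = tens_prod (hmult H a c) (hmult H b e)"
proof (rule ext, clarify)
  fix x y
  have "tmult H (tens_prod a b) (tens_prod c e) (x,y)
     = (\<Sum>i1<d. \<Sum>j1<d. \<Sum>i2<d. \<Sum>j2<d. (a i1 * c i2 * hmult H (bvec i1) (bvec i2) x) * (b j1 * e j2 * hmult H (bvec j1) (bvec j2) y))"
    by (simp add: tmult_def tens_prod_def mult_ac)
  also have "\<dots> = (\<Sum>i1<d. \<Sum>i2<d. \<Sum>j1<d. \<Sum>j2<d. (a i1 * c i2 * hmult H (bvec i1) (bvec i2) x) * (b j1 * e j2 * hmult H (bvec j1) (bvec j2) y))"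
    by (rule sum_swap_mid)
  also have "\<dots> = (\<Sum>i1<d. \<Sum>i2<d. a i1 * c i2 * hmult H (bvec i1) (bvec i2) x) * (\<Sum>j1<d. \<Sum>j2<d. b j1 * e j2 * hmult H (bvec j1) (bvec j2) y)"
    by (rule sum2_mult_sum2[symmetric])
  also have "\<dots> = hmult H a c x * hmult H b e y"
    by (simp only: hmult_basis_expand[of a c x] hmult_basis_expand[of b e y])
  finally show "tmult H (tens_prod a b) (tens_prod c e) (x,y) = tens_prod (hmult H a c) (hmult H b e) (x,y)"
    by (simp add: tens_prod_def)
qed

section \<open>The coradical of a connected Hopf algebra\<close>

definition scalars :: "(nat \<Rightarrow> 'k) set" where "scalars = {smul c u | c. True}"

lemma subspace_of_iff: "subspace_of H W \<longleftrightarrow> W \<subseteq> V \<and> lin_closed W"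
  by (auto simp: subspace_of_def lin_closed_def)

lemma unit_nonzero: "u \<noteq> zv"
proof
  assume "u = zv"
  then have "hcounit H u = 0" by (simp add: hcounit_def zv_def)
  then show False using hopf_counit_unit by simp
qed

lemma scalars_in_vecs: "scalars \<subseteq> V"
  using unit_in_vecs by (auto simp: scalars_def vecs_def smul_def)

lemma unit_in_scalars: "u \<in> scalars"
  unfolding scalars_def by (rule CollectI, rule exI[of _ 1]) (simp add: smul_def)

lemma smul_smul: "smul a (smul b v) = smul (a * b) v"
  by (simp add: smul_def fun_eq_iff)

lemma lin_closed_scalars: "lin_closed scalars"
proof (rule lin_closedI)
  have "zv = smul 0 u" by (simp add: zv_def smul_def fun_eq_iff)
  then show "zv \<in> scalars" by (auto simp: scalars_def)
next
  fix v w assume "v \<in> scalars" "w \<in> scalars"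
  then obtain a b where "v = smul a u" "w = smul b u" by (auto simp: scalars_def)
  then have "addv v w = smul (a + b) u" by (simp add: addv_def smul_def fun_eq_iff algebra_simps)
  then show "addv v w \<in> scalars" by (auto simp: scalars_def)
next
  fix c v assume "v \<in> scalars"
  then show "smul c v \<in> scalars" by (auto simp: scalars_def smul_smul)
qed

lemma scalars_eq_kspan_unit: "scalars = kspan {u}"
proof
  show "kspan {u} \<subseteq> scalars"
    by (rule kspan_least[OF lin_closed_scalars]) (simp add: unit_in_scalars)
  show "scalars \<subseteq> kspan {u}"
    by (auto simp: scalars_def intro: kspan.kspan_smul kspan.kspan_base)
qed

lemma scalar_multiple_in: "lin_closed W \<Longrightarrow> w \<in> W \<Longrightarrow> w = smul c v \<Longrightarrow> c \<noteq> 0 \<Longrightarrow> smul a v \<in> W"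
  using lin_closed_smul[of W w "a / c"] by (simp add: smul_smul)

lemma subcoalgebra_scalars: "subcoalgebra H scalars"
proof -
  have "hcomult H (smul c u) \<in> tens_sp scalars scalars" for c
    using lin_closed_smul[OF lin_closed_tens_sp tens_sp_base[OF unit_in_scalars unit_in_scalars]]
    by (simp add: hcomult_smul hopf_comult_unit)
  then show ?thesis
    unfolding subcoalgebra_def subspace_of_iff
    using scalars_in_vecs lin_closed_scalars by (auto simp: scalars_def)
qed

lemma simple_subcoalgebra_scalars: "simple_subcoalgebra H scalars"
proof -
  have minimal: "W = {zv} \<or> W = scalars" if W: "subcoalgebra H W" "W \<subseteq> scalars" for W
  proof (rule disjCI)
    assume "W \<noteq> scalars"
    have cl: "lin_closed W" using W by (simp add: subcoalgebra_def subspace_of_iff)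
    have "w = zv" if "w \<in> W" for w
    proof (rule ccontr)
      assume "w \<noteq> zv"
      obtain c where c: "w = smul c u" using W \<open>w \<in> W\<close> by (auto simp: scalars_def)
      with \<open>w \<noteq> zv\<close> have "c \<noteq> 0" by (auto simp: smul_def zv_def fun_eq_iff)
      then have "scalars \<subseteq> W"
        using scalar_multiple_in[OF cl \<open>w \<in> W\<close> c] by (auto simp: scalars_def)
      with W \<open>W \<noteq> scalars\<close> show False by auto
    qed
    then show "W = {zv}" using lin_closed_zv[OF cl] by auto
  qed
  have "scalars \<noteq> {zv}" using unit_in_scalars unit_nonzero by auto
  then show ?thesis
    unfolding simple_subcoalgebra_def using subcoalgebra_scalars minimal by blast
qed

lemma coradical_eq_scalars:
  assumes "connected_hopf H" shows "coradical H = scalars"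
proof -
  obtain v where v: "coradical H = {smul c v | c. True}"
    using assms by (auto simp: connected_hopf_def)
  have "scalars \<subseteq> coradical H"
    using simple_subcoalgebra_scalars unfolding coradical_def by (auto intro: kspan.kspan_base)
  then obtain c where c: "u = smul c v" using unit_in_scalars v by auto
  with unit_nonzero have "c \<noteq> 0" by (auto simp: smul_def zv_def fun_eq_iff)
  have "coradical H \<subseteq> scalars"
    using scalar_multiple_in[OF lin_closed_scalars unit_in_scalars c \<open>c \<noteq> 0\<close>] v by auto
  with \<open>scalars \<subseteq> coradical H\<close> show ?thesis by blast
qed

section \<open>Generated subalgebras\<close>

lemma subalgebra_of_iff:
  "subalgebra_of H K \<longleftrightarrow> K \<subseteq> V \<and> lin_closed K \<and> u \<in> K \<and> (\<forall>v\<in>K. \<forall>w\<in>K. hmult H v w \<in> K)"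
  by (auto simp: subalgebra_of_def subspace_of_iff)

lemma subalgebra_gen_subalg:
  assumes "X \<subseteq> V" shows "subalgebra_of H (gen_subalg H X)"
proof -
  have "V \<in> {A. subalgebra_of H A \<and> X \<subseteq> A}"
    using assms by (simp add: subalgebra_of_iff lin_closed_vecs unit_in_vecs hmult_in_vecs)
  then show ?thesis
    unfolding gen_subalg_def subalgebra_of_iff
    by (intro conjI lin_closedI) (auto simp: subalgebra_of_iff intro: lin_closed_zv lin_closed_add lin_closed_smul)
qed

lemma gen_subalg_subset: "X \<subseteq> gen_subalg H X"
  by (auto simp: gen_subalg_def)

lemma gen_subalg_least: "subalgebra_of H A \<Longrightarrow> X \<subseteq> A \<Longrightarrow> gen_subalg H X \<subseteq> A"
  by (auto simp: gen_subalg_def)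

lemma gen_subalg_induct [consumes 2, case_names base unit add smul mult]:
  assumes "X \<subseteq> V" and "x \<in> gen_subalg H X"
    and "\<And>x. x \<in> X \<Longrightarrow> P x"
    and "P u"
    and "\<And>v w. v \<in> V \<Longrightarrow> w \<in> V \<Longrightarrow> P v \<Longrightarrow> P w \<Longrightarrow> P (addv v w)"
    and "\<And>c v. v \<in> V \<Longrightarrow> P v \<Longrightarrow> P (smul c v)"
    and "\<And>v w. v \<in> V \<Longrightarrow> w \<in> V \<Longrightarrow> P v \<Longrightarrow> P w \<Longrightarrow> P (hmult H v w)"
  shows "P x"
proof -
  have "zv = smul 0 u" by (simp add: zv_def smul_def fun_eq_iff)
  then have "P zv" using assms(4,6) unit_in_vecs by metis
  then have "subalgebra_of H {x \<in> V. P x}"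
    using assms(4-7) unit_in_vecs
    by (auto simp: subalgebra_of_iff lin_closed_def zv_in_vecs addv_in_vecs smul_in_vecs hmult_in_vecs)
  then have "gen_subalg H X \<subseteq> {x \<in> V. P x}"
    by (rule gen_subalg_least) (use assms(1,3) in auto)
  with assms(2) show ?thesis by blast
qed

lemma subalgebra_scalars: "subalgebra_of H scalars"
proof -
  have "hmult H (smul a u) (smul b u) = smul (a * b) u" for a b
    using hopf_unit[OF unit_in_vecs] by (simp add: hmult_smulL hmult_smulR smul_smul mult.commute)
  then show ?thesis
    unfolding subalgebra_of_iff
    using scalars_in_vecs lin_closed_scalars unit_in_scalars by (auto simp: scalars_def)
qed

lemma gen_subalg_scalars: "gen_subalg H scalars = scalars"
  using gen_subalg_least[OF subalgebra_scalars] gen_subalg_subset by blast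

lemma tmult_tens_sp:
  assumes KV: "K \<subseteq> V" and Km: "\<And>a b. a \<in> K \<Longrightarrow> b \<in> K \<Longrightarrow> hmult H a b \<in> K"
    and "T1 \<in> tens_sp K K" and "T2 \<in> tens_sp K K"
  shows "tmult H T1 T2 \<in> tens_sp K K"
proof -
  have base: "tmult H (tens_prod a b) T \<in> tens_sp K K" if ab: "a \<in> K" "b \<in> K" and "T \<in> tens_sp K K" for a b T
  proof -
    from \<open>T \<in> tens_sp K K\<close> have "T \<in> kspan {tens_prod a b | a b. a \<in> K \<and> b \<in> K}" by (simp add: tens_sp_def)
    then show ?thesis
    proof (induction rule: kspan.induct)
      case kspan_zero then show ?case by (simp add: tmult_zvR lin_closed_zv[OF lin_closed_tens_sp])
    next
      case (kspan_base v)
      then obtain c e where v: "v = tens_prod c e" "c \<in> K" "e \<in> K" by blast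
      then have "tmult H (tens_prod a b) v = tens_prod (hmult H a c) (hmult H b e)"
        using ab KV by (auto intro: tmult_tens_prod)
      then show ?case using v ab Km by (auto intro: tens_sp_base)
    next
      case (kspan_add v w) then show ?case by (simp add: tmult_addR lin_closed_add[OF lin_closed_tens_sp])
    next
      case (kspan_smul v c) then show ?case by (simp add: tmult_smulR lin_closed_smul[OF lin_closed_tens_sp])
    qed
  qed
  from \<open>T1 \<in> tens_sp K K\<close> have "T1 \<in> kspan {tens_prod a b | a b. a \<in> K \<and> b \<in> K}" by (simp add: tens_sp_def)
  then show ?thesis
  proof (induction rule: kspan.induct)
    case kspan_zero then show ?case by (simp add: tmult_zvL lin_closed_zv[OF lin_closed_tens_sp])
  next
    case (kspan_base v) then show ?case using base \<open>T2 \<in> tens_sp K K\<close> by blast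
  next
    case (kspan_add v w) then show ?case by (simp add: tmult_addL lin_closed_add[OF lin_closed_tens_sp])
  next
    case (kspan_smul v c) then show ?case by (simp add: tmult_smulL lin_closed_smul[OF lin_closed_tens_sp])
  qed
qed

lemma hcomult_gen_subalg:
  assumes X: "X \<subseteq> V" "hcomult H ` X \<subseteq> tens_sp X X" and x: "x \<in> gen_subalg H X"
  shows "hcomult H x \<in> tens_sp (gen_subalg H X) (gen_subalg H X)"
  using X(1) x
proof (induction rule: gen_subalg_induct)
  case (base x)
  then show ?case using X(2) tens_sp_mono[OF gen_subalg_subset gen_subalg_subset] by blast
next
  case unit
  show ?case using subalgebra_gen_subalg[OF X(1)]
    by (simp add: hopf_comult_unit tens_sp_base subalgebra_of_iff)
next
  case (mult v w)
  then show ?case using subalgebra_gen_subalg[OF X(1)]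
    by (simp add: hopf_comult_mult tmult_tens_sp subalgebra_of_iff)
qed (simp_all add: hcomult_add hcomult_smul lin_closed_add lin_closed_smul lin_closed_tens_sp)

lemma hanti_gen_subalg:
  assumes X: "X \<subseteq> V" "hanti H ` X \<subseteq> X" and x: "x \<in> gen_subalg H X"
  shows "hanti H x \<in> gen_subalg H X"
proof -
  have K: "lin_closed (gen_subalg H X)" "u \<in> gen_subalg H X"
    "\<And>v w. v \<in> gen_subalg H X \<Longrightarrow> w \<in> gen_subalg H X \<Longrightarrow> hmult H v w \<in> gen_subalg H X"
    using subalgebra_gen_subalg[OF X(1)] by (auto simp: subalgebra_of_iff)
  from X(1) x show ?thesis
  proof (induction rule: gen_subalg_induct)
    case (base x) then show ?case using X(2) gen_subalg_subset by blast
  qed (use K in \<open>simp_all add: hanti_unit hanti_add hanti_smul hanti_hmult lin_closed_add lin_closed_smul\<close>)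
qed

section \<open>Operators preserving the coradical filtration\<close>

definition filt_tensor :: "nat \<Rightarrow> (nat \<times> nat \<Rightarrow> 'k) set" where
  "filt_tensor n = sum_sp (tens_sp V (corad_filt H n)) (tens_sp scalars V)"

lemma lin_closed_filt_tensor: "lin_closed (filt_tensor n)"
  unfolding filt_tensor_def by (intro lin_closed_sum_sp lin_closed_tens_sp)

lemma corad_filt_0: "connected_hopf H \<Longrightarrow> corad_filt H 0 = scalars"
  by (simp add: coradical_eq_scalars)

lemma corad_filt_Suc:
  "connected_hopf H \<Longrightarrow> corad_filt H (Suc n) = {v \<in> V. hcomult H v \<in> filt_tensor n}"
  by (simp add: coradical_eq_scalars filt_tensor_def)

lemma corad_filt_subset: "connected_hopf H \<Longrightarrow> corad_filt H n \<subseteq> V"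
  by (cases n) (auto simp: corad_filt_0 corad_filt_Suc scalars_in_vecs simp del: corad_filt.simps)

lemma lin_closed_corad_filt: "connected_hopf H \<Longrightarrow> lin_closed (corad_filt H n)"
proof (cases n)
  case (Suc k)
  assume "connected_hopf H"
  show ?thesis unfolding Suc corad_filt_Suc[OF \<open>connected_hopf H\<close>]
    by (rule lin_closedI)
      (simp_all add: zv_in_vecs addv_in_vecs smul_in_vecs hcomult_zv hcomult_add hcomult_smul
        lin_closed_zv[OF lin_closed_filt_tensor] lin_closed_add[OF lin_closed_filt_tensor]
        lin_closed_smul[OF lin_closed_filt_tensor])
qed (simp add: coradical_eq_scalars lin_closed_scalars)

definition coradical_compatible :: "((nat \<Rightarrow> 'k) \<Rightarrow> nat \<Rightarrow> 'k) set \<Rightarrow> bool" where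
  "coradical_compatible F \<longleftrightarrow> (\<forall>f\<in>F. basis_linear f \<and> f ` V \<subseteq> V \<and> f ` scalars \<subseteq> scalars
     \<and> (\<forall>x\<in>V. hcomult H (f x) \<in> kspan {tens_map g h (hcomult H x) | g h. g \<in> F \<and> h \<in> F}))"

lemma corad_filt_stable:
  assumes conn: "connected_hopf H" and F: "coradical_compatible F"
  shows "\<forall>f\<in>F. f ` corad_filt H n \<subseteq> corad_filt H n"
proof (induction n)
  case 0
  show ?case using F by (simp add: coradical_compatible_def coradical_eq_scalars[OF conn])
next
  case (Suc n)
  have "tens_map g h T \<in> filt_tensor n" if "g \<in> F" "h \<in> F" "T \<in> filt_tensor n" for g h T
    unfolding filt_tensor_def
    using that F Suc.IH scalars_in_vecs corad_filt_subset[OF conn]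
    by (intro tens_map_sum_sp[where A = V and C = scalars and E = V])
      (auto simp: filt_tensor_def coradical_compatible_def)
  then have "kspan {tens_map g h (hcomult H x) | g h. g \<in> F \<and> h \<in> F} \<subseteq> filt_tensor n"
    if "hcomult H x \<in> filt_tensor n" for x
    using that by (intro kspan_least[OF lin_closed_filt_tensor]) blast
  then show ?case
    using F by (fastforce simp: corad_filt_Suc[OF conn] coradical_compatible_def simp del: corad_filt.simps)
qed

lemma upper_power_eq_gen_subalg:
  assumes "connected_hopf H"
  shows "upper_power H n = gen_subalg H (corad_filt H (if n = 0 then 0 else CHAR('k) ^ (n - 1)))"
  using gen_subalg_scalars by (simp add: upper_power_def coradical_eq_scalars[OF assms] scalars_eq_kspan_unit)

definition row :: "nat \<Rightarrow> (nat \<Rightarrow> 'k) \<Rightarrow> nat \<Rightarrow> 'k" where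
  "row i x = (\<lambda>b. hcomult H x (i, b))"

lemma row_in_vecs: "row i x \<in> V"
  by (simp add: vecs_def row_def hcomult_def)

lemma row_scalars: "row i ` scalars \<subseteq> scalars"
proof
  fix y assume "y \<in> row i ` scalars"
  then obtain c where y: "y = row i (smul c u)" by (auto simp: scalars_def)
  have "y = smul (c * u i) u"
    by (simp add: y row_def hcomult_smul hopf_comult_unit) (simp add: smul_def tens_prod_def fun_eq_iff mult_ac)
  then show "y \<in> scalars" by (auto simp: scalars_def)
qed

lemma basis_linear_row: "i < d \<Longrightarrow> basis_linear (row i)"
  unfolding basis_linear_def row_def
proof (intro ballI ext)
  fix x a assume "i < d" "x \<in> V"
  then show "hcomult H x (i, a) = (\<Sum>c<d. x c * hcomult H (bvec c) (i, a))"
    by (cases "a < d") (simp_all add: hcomult_eq bvec_apply if_zero_simps)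
qed

lemma hcomult_row:
  assumes "x \<in> V" and i: "i < d"
  shows "hcomult H (row i x) = tens_map (row i) (\<lambda>y. y) (hcomult H x)"
proof (rule ext, clarify)
  fix a b
  show "hcomult H (row i x) (a,b) = tens_map (row i) (\<lambda>y. y) (hcomult H x) (a,b)"
  proof (cases "a < d \<and> b < d")
    case False then show ?thesis
      by (auto simp: hcomult_def tens_map_def row_def bvec_apply)
  next
    case True
    then have a: "a<d" and b: "b<d" by auto
    have "hcomult H (row i x) (a,b) = (\<Sum>c<d. (\<Sum>l<d. x l * D l i c) * D c a b)"
      using a b i by (simp add: hcomult_def row_def)
    also have "\<dots> = (\<Sum>l<d. x l * (\<Sum>c<d. D l i c * D c a b))"
      by (simp add: sum_distrib_left sum_distrib_right) (rule trans[OF sum.swap], simp add: mult_ac)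
    also have "\<dots> = (\<Sum>l<d. x l * (\<Sum>j<d. D l j b * D j i a))"
      using a b i by (intro sum.cong refl) (simp add: delta_coassoc)
    also have "\<dots> = (\<Sum>j<d. (\<Sum>l<d. x l * D l j b) * D j i a)"
      by (simp add: sum_distrib_left sum_distrib_right) (rule trans[OF sum.swap], simp add: mult_ac)
    also have "\<dots> = tens_map (row i) (\<lambda>y. y) (hcomult H x) (a,b)"
      using a b i by (simp add: tens_map_def row_def hcomult_def bvec_apply if_zero_simps hcomult_bvec)
    finally show ?thesis .
  qed
qed

lemma tens_map_id_hcomult: "tens_map (\<lambda>y. y) (\<lambda>y. y) (hcomult H x) = hcomult H x"
  by (auto simp: fun_eq_iff tens_map_def bvec_apply if_zero_simps hcomult_def)

lemma coradical_compatible_rows: "coradical_compatible (insert (\<lambda>y. y) {row i | i. i < d})"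
  unfolding coradical_compatible_def
proof (intro ballI conjI)
  fix f assume f: "f \<in> insert (\<lambda>y. y) {row i | i. i < d}"
  then show "basis_linear f" "f ` V \<subseteq> V"
    using basis_linear_id basis_linear_row row_in_vecs by auto
  show "f ` scalars \<subseteq> scalars" using f row_scalars by blast
  fix x assume "x \<in> V"
  with f have "hcomult H (f x) = tens_map f (\<lambda>y. y) (hcomult H x)"
    by (auto simp: hcomult_row tens_map_id_hcomult)
  with f show "hcomult H (f x) \<in> kspan {tens_map g h (hcomult H x) | g h.
      g \<in> insert (\<lambda>y. y) {row i | i. i < d} \<and> h \<in> insert (\<lambda>y. y) {row i | i. i < d}}"
    by (auto intro!: kspan.kspan_base)
qed

lemma row_corad_filt:
  "connected_hopf H \<Longrightarrow> x \<in> corad_filt H n \<Longrightarrow> i < d \<Longrightarrow> row i x \<in> corad_filt H n"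
  using corad_filt_stable[OF _ coradical_compatible_rows] by blast

end

locale cocomm_hopf = fd_hopf H for H :: "'k::field hopf" +
  assumes cocom: "cocommutative H"
begin

lemma delta_cocomm: "l<d \<Longrightarrow> i<d \<Longrightarrow> j<d \<Longrightarrow> D l i j = D l j i"
  using cocom bvec_in_vecs[of l] unfolding cocommutative_def by (metis hcomult_bvec)

lemma delta_anti_cocomm: assumes "i<d" "p<d" "q<d"
  shows "(\<Sum>r<d. s i r * D r p q) = (\<Sum>a<d. \<Sum>b<d. D i a b * (s a p * s b q))"
proof -
  have "(\<Sum>r<d. s i r * D r p q) = (\<Sum>a<d. \<Sum>b<d. D i a b * s b p * s a q)"
    using assms by (simp add: delta_anti)
  also have "\<dots> = (\<Sum>b<d. \<Sum>a<d. D i a b * s b p * s a q)" by (rule sum.swap)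
  also have "\<dots> = (\<Sum>b<d. \<Sum>a<d. D i b a * s b p * s a q)"
    using assms by (intro sum.cong refl) (simp add: delta_cocomm)
  finally show ?thesis by (simp add: mult_ac)
qed

lemma hcomult_hanti: assumes x: "x \<in> V"
  shows "hcomult H (hanti H x) = tens_map (hanti H) (hanti H) (hcomult H x)"
proof (rule ext, clarify)
  fix a b
  show "hcomult H (hanti H x) (a,b) = tens_map (hanti H) (hanti H) (hcomult H x) (a,b)"
  proof (cases "a < d \<and> b < d")
    case False then show ?thesis by (auto simp: hcomult_def tens_map_def hanti_def)
  next
    case True
    then have a: "a<d" and b: "b<d" by auto
    have "hcomult H (hanti H x) (a,b) = (\<Sum>l<d. (\<Sum>c<d. x c * s c l) * D l a b)"
      using a b by (simp add: hcomult_def hanti_def)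
    also have "\<dots> = (\<Sum>c<d. x c * (\<Sum>l<d. s c l * D l a b))"
      by (simp add: sum_distrib_left sum_distrib_right mult_ac) (rule sum.swap)
    also have "\<dots> = (\<Sum>c<d. \<Sum>p<d. \<Sum>q<d. x c * (D c p q * (s p a * s q b)))"
      using a b by (simp add: delta_anti_cocomm sum_distrib_left)
    also have "\<dots> = (\<Sum>p<d. \<Sum>q<d. \<Sum>c<d. x c * (D c p q * (s p a * s q b)))"
      by (rule sum_rotate3[symmetric])
    also have "\<dots> = tens_map (hanti H) (hanti H) (hcomult H x) (a,b)"
      using a b by (simp add: tens_map_def hcomult_def hanti_bvec sum_distrib_left sum_distrib_right mult_ac)
    finally show ?thesis .
  qed
qed

lemma coradical_compatible_hanti: "coradical_compatible {hanti H}"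
  unfolding coradical_compatible_def
  using basis_linear_hanti hanti_in_vecs
  by (auto simp: hcomult_hanti scalars_def hanti_smul hanti_unit intro: kspan.kspan_base)

lemma hcomult_corad_filt:
  assumes conn: "connected_hopf H" and x: "x \<in> corad_filt H n"
  shows "hcomult H x \<in> tens_sp (corad_filt H n) (corad_filt H n)"
proof -
  have xV: "x \<in> V" using corad_filt_subset[OF conn] x by blast
  have rows: "\<forall>i<d. (\<lambda>j. hcomult H x (i,j)) \<in> corad_filt H n"
    using row_corad_filt[OF conn x] by (simp add: row_def)
  moreover have "(\<lambda>i. hcomult H x (i,j)) = row j x" for j
    using cocom xV by (auto simp: row_def fun_eq_iff cocommutative_def)
  ultimately show ?thesis
    using lin_closed_corad_filt[OF conn] hcomult_supp
    by (intro tens_sp_of_rows_cols) (auto simp: row_corad_filt[OF conn x])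
qed

lemma coassoc_cocomm_swap: assumes l: "l<d"
  shows "(\<Sum>i<d. \<Sum>j<d. D l i j * (\<Sum>p<d. \<Sum>q<d. D i p q * (\<Sum>r<d. \<Sum>w<d. D j r w * Z p q r w)))
       = (\<Sum>i<d. \<Sum>j<d. D l i j * (\<Sum>p<d. \<Sum>q<d. D i p q * (\<Sum>r<d. \<Sum>w<d. D j r w * Z p r q w)))"
proof -
  have key: "(\<Sum>q<d. \<Sum>j<d. D k q j * (\<Sum>r<d. \<Sum>w<d. D j r w * Y q r w))
           = (\<Sum>q<d. \<Sum>j<d. D k q j * (\<Sum>r<d. \<Sum>w<d. D j r w * Y r q w))" if k: "k<d" for k Y
  proof -
    have g: "(\<Sum>q<d. \<Sum>j<d. D k q j * (\<Sum>r<d. \<Sum>w<d. D j r w * Y q r w))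
           = (\<Sum>i<d. \<Sum>w<d. D k i w * (\<Sum>q<d. \<Sum>r<d. D i q r * Y q r w))" for Y
      by (rule co.coassoc_sum[symmetric]) (simp add: k)
    have c: "(\<Sum>q<d. \<Sum>r<d. D i q r * Y q r w) = (\<Sum>q<d. \<Sum>r<d. D i q r * Y r q w)" if i: "i<d" for i w
    proof -
      have "(\<Sum>q<d. \<Sum>r<d. D i q r * Y r q w) = (\<Sum>r<d. \<Sum>q<d. D i q r * Y r q w)"
        by (rule sum.swap)
      also have "\<dots> = (\<Sum>r<d. \<Sum>q<d. D i r q * Y r q w)"
        using i by (intro sum.cong refl) (simp add: delta_cocomm)
      finally show ?thesis by simp
    qed
    show ?thesis unfolding g by (simp add: c)
  qed
  have "(\<Sum>i<d. \<Sum>j<d. D l i j * (\<Sum>p<d. \<Sum>q<d. D i p q * (\<Sum>r<d. \<Sum>w<d. D j r w * Z p q r w)))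
      = (\<Sum>p<d. \<Sum>k<d. D l p k * (\<Sum>q<d. \<Sum>j<d. D k q j * (\<Sum>r<d. \<Sum>w<d. D j r w * Z p q r w)))"
    by (rule co.coassoc_sum) (simp add: l)
  also have "\<dots> = (\<Sum>p<d. \<Sum>k<d. D l p k * (\<Sum>q<d. \<Sum>j<d. D k q j * (\<Sum>r<d. \<Sum>w<d. D j r w * Z p r q w)))"
  proof (rule sum.cong[OF refl], rule sum.cong[OF refl])
    fix p k assume "k \<in> {..<d}"
    then show "D l p k * (\<Sum>q<d. \<Sum>j<d. D k q j * (\<Sum>r<d. \<Sum>w<d. D j r w * Z p q r w))
       = D l p k * (\<Sum>q<d. \<Sum>j<d. D k q j * (\<Sum>r<d. \<Sum>w<d. D j r w * Z p r q w))"
      using key[of k "\<lambda>q r w. Z p q r w"] by simp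
  qed
  also have "\<dots> = (\<Sum>i<d. \<Sum>j<d. D l i j * (\<Sum>p<d. \<Sum>q<d. D i p q * (\<Sum>r<d. \<Sum>w<d. D j r w * Z p r q w)))"
    by (rule co.coassoc_sum[symmetric]) (simp add: l)
  finally show ?thesis .
qed

end

section \<open>Adjoint actions\<close>

text \<open>\<open>L\<close> and \<open>R\<close> are coefficient matrices of two mutually convolution-inverse coalgebra maps and
  \<open>adj h x = \<Sum> L(h\<^sub>1) x R(h\<^sub>2)\<close>. The pair \<open>(S, id)\<close> gives the left adjoint action
  \<open>S(h\<^sub>1) x h\<^sub>2\<close> and \<open>(id, S)\<close> the right one \<open>h\<^sub>1 x S(h\<^sub>2)\<close>.\<close>

locale adjoint_pair = cocomm_hopf H for H :: "'k::field hopf" +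
  fixes L R :: "nat \<Rightarrow> nat \<Rightarrow> 'k"
  assumes inverse_LR: "l<d \<Longrightarrow> t<d \<Longrightarrow> (\<Sum>i<d. \<Sum>j<d. D l i j * al.amult (L i) (R j) t) = ep l * u t"
  and inverse_RL: "l<d \<Longrightarrow> t<d \<Longrightarrow> (\<Sum>i<d. \<Sum>j<d. D l i j * al.amult (R i) (L j) t) = ep l * u t"
  and delta_L: "i<d \<Longrightarrow> p<d \<Longrightarrow> q<d \<Longrightarrow> (\<Sum>r<d. L i r * D r p q) = (\<Sum>a<d. \<Sum>b<d. D i a b * (L a p * L b q))"
  and delta_R: "i<d \<Longrightarrow> p<d \<Longrightarrow> q<d \<Longrightarrow> (\<Sum>r<d. R i r * D r p q) = (\<Sum>a<d. \<Sum>b<d. D i a b * (R a p * R b q))"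
begin

definition adj_coeff where "adj_coeff l x t = (\<Sum>i<d. \<Sum>j<d. D l i j * al.amult (L i) (al.amult x (R j)) t)"

lemma adj_coeff_fun: "adj_coeff l x = (\<lambda>t. \<Sum>i<d. \<Sum>j<d. D l i j * al.amult (L i) (al.amult x (R j)) t)"
  by (simp add: adj_coeff_def fun_eq_iff)

lemma adj_coeff_unit: assumes "l<d" "t<d" shows "adj_coeff l u t = ep l * u t"
proof -
  have "adj_coeff l u t = (\<Sum>i<d. \<Sum>j<d. D l i j * al.amult (L i) (R j) t)"
    unfolding adj_coeff_def by (intro sum.cong refl arg_cong2[where f="(*)"] al.amult_cong) (auto simp: al.amult_unit_left)
  then show ?thesis using assms by (simp add: inverse_LR)
qed

lemma amult_inverse_pair_inside:
  assumes v: "v<d" and t: "t<d"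
  shows "(\<Sum>q<d. \<Sum>r<d. D v q r * al.amult (al.amult a (al.amult x (R q))) (al.amult (L r) (al.amult y b)) t)
    = ep v * al.amult (al.amult a x) (al.amult y b) t"
proof -
  have "(\<Sum>q<d. \<Sum>r<d. D v q r * al.amult (al.amult a (al.amult x (R q))) (al.amult (L r) (al.amult y b)) t)
      = (\<Sum>q<d. \<Sum>r<d. D v q r * al.amult (al.amult a x) (al.amult (al.amult (R q) (L r)) (al.amult y b)) t)"
    using t by (simp add: amult_regroup)
  also have "\<dots> = al.amult (al.amult a x)
      (\<lambda>z. al.amult (\<lambda>z'. \<Sum>q<d. \<Sum>r<d. D v q r * al.amult (R q) (L r) z') (al.amult y b) z) t"
    by (simp only: al.amult_sum2_right[symmetric] al.amult_sum2_left)
  also have "\<dots> = al.amult (al.amult a x) (\<lambda>z. al.amult (\<lambda>z'. ep v * u z') (al.amult y b) z) t"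
    by (rule al.amult_cong[OF refl], rule al.amult_cong[OF _ refl]) (simp add: inverse_RL v)
  also have "\<dots> = al.amult (al.amult a x) (\<lambda>z. ep v * al.amult y b z) t"
    by (rule al.amult_cong[OF refl]) (simp add: al.amult_scale_left al.amult_unit_left)
  also have "\<dots> = ep v * al.amult (al.amult a x) (al.amult y b) t"
    by (rule al.amult_scale_right)
  finally show ?thesis .
qed

lemma adj_coeff_amult: assumes l: "l<d" and t: "t<d"
  shows "adj_coeff l (al.amult x y) t = (\<Sum>i<d. \<Sum>j<d. D l i j * al.amult (adj_coeff i x) (adj_coeff j y) t)"
proof -
  define Z where "Z = (\<lambda>p q r w. al.amult (al.amult (L p) (al.amult x (R q))) (al.amult (L r) (al.amult y (R w))) t)"
  have "(\<Sum>i<d. \<Sum>j<d. D l i j * al.amult (adj_coeff i x) (adj_coeff j y) t)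
      = (\<Sum>i<d. \<Sum>j<d. D l i j * (\<Sum>p<d. \<Sum>q<d. D i p q * (\<Sum>r<d. \<Sum>w<d. D j r w * Z p q r w)))"
    unfolding adj_coeff_fun al.amult_sum2_left al.amult_sum2_right Z_def ..
  also have "\<dots> = (\<Sum>p<d. \<Sum>k<d. D l p k * (\<Sum>q<d. \<Sum>j<d. D k q j * (\<Sum>r<d. \<Sum>w<d. D j r w * Z p q r w)))"
    by (rule co.coassoc_sum) (simp add: l)
  also have "\<dots> = (\<Sum>p<d. \<Sum>k<d. D l p k * (\<Sum>v<d. \<Sum>w<d. D k v w * (\<Sum>q<d. \<Sum>r<d. D v q r * Z p q r w)))"
  proof (rule sum.cong[OF refl], rule sum.cong[OF refl])
    fix p k assume "k \<in> {..<d}"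
    then show "D l p k * (\<Sum>q<d. \<Sum>j<d. D k q j * (\<Sum>r<d. \<Sum>w<d. D j r w * Z p q r w))
      = D l p k * (\<Sum>v<d. \<Sum>w<d. D k v w * (\<Sum>q<d. \<Sum>r<d. D v q r * Z p q r w))"
      using co.coassoc_sum[of k "\<lambda>q r w. Z p q r w"] by simp
  qed
  also have "\<dots> = (\<Sum>p<d. \<Sum>k<d. D l p k * (\<Sum>v<d. \<Sum>w<d. D k v w * (ep v * al.amult (al.amult (L p) x) (al.amult y (R w)) t)))"
    unfolding Z_def using t by (simp add: amult_inverse_pair_inside)
  also have "\<dots> = (\<Sum>p<d. \<Sum>k<d. D l p k * al.amult (al.amult (L p) x) (al.amult y (R k)) t)"
    by (intro sum.cong refl arg_cong2[where f="(*)"] co.counit_sum_left) simp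
  also have "\<dots> = adj_coeff l (al.amult x y) t"
  proof -
    have "al.amult (L p) (al.amult x (al.amult y (R k))) t = al.amult (L p) (al.amult (al.amult x y) (R k)) t" for p k
      by (rule al.amult_cong[OF refl]) (simp add: al.amult_assoc)
    then show ?thesis unfolding adj_coeff_def using t by (simp add: al.amult_assoc)
  qed
  finally show ?thesis by simp
qed

definition sandwich_coeff :: "nat \<Rightarrow> nat \<Rightarrow> nat \<Rightarrow> nat \<Rightarrow> 'k" where
  "sandwich_coeff p c r a = al.amult (L p) (al.amult (bvec c) (R r)) a"

lemma comult_coeffs_right:
  assumes j: "j<d" and z: "z \<in> {..<d}\<times>{..<d}"
  shows "comult_coeffs (al.amult x (R j)) z = (\<Sum>c<d. \<Sum>e<d. comult_coeffs x (c,e) *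
    (\<Sum>r<d. \<Sum>w<d. D j r w * tens_pair (al.amult (bvec c) (R r)) (al.amult (bvec e) (R w)) z))"
proof -
  obtain z1 z2 where zz: "z = (z1,z2)" "z1<d" "z2<d" using z by auto
  have "comult_coeffs (al.amult x (R j)) z = al2.amult (comult_coeffs x) (comult_coeffs (R j)) z"
    unfolding zz(1) using zz by (simp add: comult_coeffs_amult[symmetric]) (simp add: comult_coeffs_def)
  also have "\<dots> = al2.amult (\<lambda>z. \<Sum>c<d. \<Sum>e<d. comult_coeffs x (c,e) * tens_pair (bvec c) (bvec e) z)
      (\<lambda>z. \<Sum>r<d. \<Sum>w<d. D j r w * tens_pair (R r) (R w) z) z"
    using j delta_R by (intro al2.amult_cong) (auto simp: comult_coeffs_def tens_pair_def bvec_apply if_zero_simps)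
  also have "\<dots> = (\<Sum>c<d. \<Sum>e<d. comult_coeffs x (c,e) *
      (\<Sum>r<d. \<Sum>w<d. D j r w * al2.amult (tens_pair (bvec c) (bvec e)) (tens_pair (R r) (R w)) z))"
    by (simp only: al2.amult_sum2_left al2.amult_sum2_right)
  finally show ?thesis
    unfolding zz(1) by (simp only: amult2_tens_pair) (simp add: tens_pair_def)
qed

lemma comult_coeffs_sandwich:
  assumes i: "i<d" and j: "j<d" and a: "a<d" and b: "b<d"
  shows "(\<Sum>t<d. al.amult (L i) (al.amult x (R j)) t * D t a b)
    = (\<Sum>p<d. \<Sum>q<d. D i p q * (\<Sum>c<d. \<Sum>e<d. comult_coeffs x (c,e) *
        (\<Sum>r<d. \<Sum>w<d. D j r w * (sandwich_coeff p c r a * sandwich_coeff q e w b))))"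
proof -
  have "(\<Sum>t<d. al.amult (L i) (al.amult x (R j)) t * D t a b)
      = al2.amult (comult_coeffs (L i)) (comult_coeffs (al.amult x (R j))) (a,b)"
    using a b by (rule comult_coeffs_amult)
  also have "\<dots> = al2.amult (\<lambda>z. \<Sum>p<d. \<Sum>q<d. D i p q * tens_pair (L p) (L q) z)
      (\<lambda>z. \<Sum>c<d. \<Sum>e<d. comult_coeffs x (c,e) *
        (\<Sum>r<d. \<Sum>w<d. D j r w * tens_pair (al.amult (bvec c) (R r)) (al.amult (bvec e) (R w)) z)) (a,b)"
  proof (rule al2.amult_cong)
    show "comult_coeffs (L i) z = (\<Sum>p<d. \<Sum>q<d. D i p q * tens_pair (L p) (L q) z)"
      if "z \<in> {..<d}\<times>{..<d}" for z
      using that i delta_L by (auto simp: comult_coeffs_def tens_pair_def)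
  qed (rule comult_coeffs_right[OF j])
  finally show ?thesis
    by (simp only: al2.amult_sum2_left al2.amult_sum2_right) (simp add: amult2_tens_pair sandwich_coeff_def)
qed

lemma adj_coeff_bvec: "adj_coeff i (bvec c) a = (\<Sum>p<d. \<Sum>r<d. D i p r * sandwich_coeff p c r a)"
  by (simp add: adj_coeff_def sandwich_coeff_def)

lemma adj_coeff_comult: assumes l: "l<d" and a: "a<d" and b: "b<d"
  shows "(\<Sum>t<d. adj_coeff l x t * D t a b)
    = (\<Sum>i<d. \<Sum>j<d. D l i j * (\<Sum>c<d. \<Sum>e<d. comult_coeffs x (c,e) * (adj_coeff i (bvec c) a * adj_coeff j (bvec e) b)))"
proof -
  define X where "X = (\<lambda>c e. comult_coeffs x (c,e))"
  define F where "F = (\<lambda>p q c e r w. sandwich_coeff p c r a * sandwich_coeff q e w b)"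
  have "(\<Sum>t<d. adj_coeff l x t * D t a b)
      = (\<Sum>i<d. \<Sum>j<d. D l i j * (\<Sum>t<d. al.amult (L i) (al.amult x (R j)) t * D t a b))"
    by (simp add: adj_coeff_def sum_distrib_left sum_distrib_right mult_ac) (rule sum_rotate3[symmetric])
  also have "\<dots> = (\<Sum>i<d. \<Sum>j<d. D l i j * (\<Sum>p<d. \<Sum>q<d. D i p q * (\<Sum>c<d. \<Sum>e<d. X c e * (\<Sum>r<d. \<Sum>w<d. D j r w * F p q c e r w))))"
    using a b by (simp add: comult_coeffs_sandwich X_def F_def)
  also have "\<dots> = (\<Sum>i<d. \<Sum>j<d. D l i j * (\<Sum>p<d. \<Sum>q<d. D i p q * (\<Sum>r<d. \<Sum>w<d. D j r w * (\<Sum>c<d. \<Sum>e<d. X c e * F p q c e r w))))"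
  proof -
    have "(\<Sum>p<d. \<Sum>q<d. D i p q * (\<Sum>c<d. \<Sum>e<d. X c e * (\<Sum>r<d. \<Sum>w<d. D j r w * F p q c e r w)))
      = (\<Sum>p<d. \<Sum>q<d. D i p q * (\<Sum>r<d. \<Sum>w<d. D j r w * (\<Sum>c<d. \<Sum>e<d. X c e * F p q c e r w)))" for i j
      by (simp only: sum2_pull_sum2[where X=X and Y="D j"])
    then show ?thesis by simp
  qed
  also have "\<dots> = (\<Sum>i<d. \<Sum>j<d. D l i j * (\<Sum>p<d. \<Sum>q<d. D i p q * (\<Sum>r<d. \<Sum>w<d. D j r w * (\<Sum>c<d. \<Sum>e<d. X c e * F p r c e q w))))"
    by (rule coassoc_cocomm_swap[OF l])
  also have "\<dots> = (\<Sum>i<d. \<Sum>j<d. D l i j * (\<Sum>c<d. \<Sum>e<d. X c e * (adj_coeff i (bvec c) a * adj_coeff j (bvec e) b)))"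
  proof -
    have "(\<Sum>p<d. \<Sum>q<d. D i p q * (\<Sum>r<d. \<Sum>w<d. D j r w * (\<Sum>c<d. \<Sum>e<d. X c e * F p r c e q w)))
        = (\<Sum>c<d. \<Sum>e<d. X c e * (adj_coeff i (bvec c) a * adj_coeff j (bvec e) b))" for i j
    proof -
      have "(\<Sum>p<d. \<Sum>q<d. D i p q * (\<Sum>r<d. \<Sum>w<d. D j r w * (\<Sum>c<d. \<Sum>e<d. X c e * F p r c e q w)))
          = (\<Sum>c<d. \<Sum>e<d. \<Sum>p<d. \<Sum>q<d. \<Sum>r<d. \<Sum>w<d. X c e *
              ((D i p q * sandwich_coeff p c q a) * (D j r w * sandwich_coeff r e w b)))"
        by (simp add: F_def sum_distrib_left mult_ac) (rule sum_swap_pairs6)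
      then show ?thesis
        unfolding adj_coeff_bvec sum2_mult_sum2 by (simp add: sum_distrib_left)
    qed
    then show ?thesis by simp
  qed
  finally show ?thesis by (simp add: X_def)
qed

definition left_vec where "left_vec i = (\<lambda>t. if t < d then L i t else 0)"

definition right_vec where "right_vec j = (\<lambda>t. if t < d then R j t else 0)"

definition adj where "adj h x = vsum (\<lambda>(i,j). smul (hcomult H h (i,j)) (hmult H (left_vec i) (hmult H x (right_vec j)))) ({..<d}\<times>{..<d})"

lemma adj_apply: "adj h x t = (\<Sum>i<d. \<Sum>j<d. hcomult H h (i,j) * hmult H (left_vec i) (hmult H x (right_vec j)) t)"
  by (simp add: adj_def vsum_apply smul_apply sum_Times)

lemma adj_outside: "t \<ge> d \<Longrightarrow> adj h x t = 0"
  by (simp add: adj_apply hmult_def)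

lemma adj_in_vecs: "adj h x \<in> V" by (simp add: vecs_def adj_outside)

lemma adj_bvec_coeff: assumes l: "l<d" and t: "t<d" shows "adj (bvec l) x t = adj_coeff l x t"
proof -
  have "adj (bvec l) x t = (\<Sum>i<d. \<Sum>j<d. D l i j * al.amult (left_vec i) (hmult H x (right_vec j)) t)"
    using l t by (simp add: adj_apply hcomult_bvec hmult_amult)
  also have "\<dots> = adj_coeff l x t"
    unfolding adj_coeff_def
    by (intro sum.cong refl arg_cong2[where f="(*)"] al.amult_cong) (auto simp: left_vec_def hmult_amult right_vec_def intro!: al.amult_cong)
  finally show ?thesis .
qed

lemma adj_bvec: "l < d \<Longrightarrow> adj (bvec l) x = (\<lambda>t. if t < d then adj_coeff l x t else 0)"
  by (auto simp: fun_eq_iff adj_bvec_coeff adj_outside)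

lemma adj_coeff_cong: "(\<And>z. z < d \<Longrightarrow> x z = x' z) \<Longrightarrow> adj_coeff l x t = adj_coeff l x' t"
  unfolding adj_coeff_def by (intro sum.cong refl arg_cong2[where f="(*)"] al.amult_cong) (auto intro!: al.amult_cong)

lemma adj_unit: "l < d \<Longrightarrow> adj (bvec l) u = smul (ep l) u"
  by (auto simp: fun_eq_iff adj_bvec adj_coeff_unit smul_def unit_outside)

lemma adj_hmult: assumes l: "l < d"
  shows "adj (bvec l) (hmult H x y) = vsum (\<lambda>(i,j). smul (D l i j) (hmult H (adj (bvec i) x) (adj (bvec j) y))) ({..<d}\<times>{..<d})"
proof (rule ext)
  fix t show "adj (bvec l) (hmult H x y) t = vsum (\<lambda>(i,j). smul (D l i j) (hmult H (adj (bvec i) x) (adj (bvec j) y))) ({..<d}\<times>{..<d}) t"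
  proof (cases "t < d")
    case False then show ?thesis by (simp add: adj_outside vsum_apply smul_apply hmult_def split_beta)
  next
    case t: True
    have "adj (bvec l) (hmult H x y) t = adj_coeff l (al.amult x y) t"
      using l t by (simp add: adj_bvec_coeff) (rule adj_coeff_cong, simp add: hmult_amult)
    also have "\<dots> = (\<Sum>i<d. \<Sum>j<d. D l i j * al.amult (adj_coeff i x) (adj_coeff j y) t)"
      using l t by (rule adj_coeff_amult)
    also have "\<dots> = (\<Sum>i<d. \<Sum>j<d. D l i j * hmult H (adj (bvec i) x) (adj (bvec j) y) t)"
      using t by (intro sum.cong refl arg_cong2[where f="(*)"]) (auto simp: hmult_amult adj_bvec_coeff intro!: al.amult_cong)
    also have "\<dots> = vsum (\<lambda>(i,j). smul (D l i j) (hmult H (adj (bvec i) x) (adj (bvec j) y))) ({..<d}\<times>{..<d}) t"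
      by (simp add: vsum_apply smul_apply sum_Times)
    finally show ?thesis .
  qed
qed

lemma hcomult_adj: assumes l: "l < d" and x: "x \<in> V"
  shows "hcomult H (adj (bvec l) x) = vsum (\<lambda>(i,j). smul (D l i j) (tens_map (adj (bvec i)) (adj (bvec j)) (hcomult H x))) ({..<d}\<times>{..<d})"
proof (rule ext, clarify)
  fix a b
  show "hcomult H (adj (bvec l) x) (a,b) = vsum (\<lambda>(i,j). smul (D l i j) (tens_map (adj (bvec i)) (adj (bvec j)) (hcomult H x))) ({..<d}\<times>{..<d}) (a,b)"
  proof (cases "a < d \<and> b < d")
    case False then show ?thesis
      by (auto simp: hcomult_def vsum_apply smul_apply tens_map_def adj_outside split_beta)
  next
    case True
    then have a: "a<d" and b: "b<d" by auto
    have "hcomult H (adj (bvec l) x) (a,b) = (\<Sum>t<d. adj_coeff l x t * D t a b)"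
      using a b l by (simp add: hcomult_def adj_bvec_coeff)
    also have "\<dots> = (\<Sum>i<d. \<Sum>j<d. D l i j * (\<Sum>c<d. \<Sum>e<d. comult_coeffs x (c,e) * (adj_coeff i (bvec c) a * adj_coeff j (bvec e) b)))"
      using l a b by (rule adj_coeff_comult)
    also have "\<dots> = vsum (\<lambda>(i,j). smul (D l i j) (tens_map (adj (bvec i)) (adj (bvec j)) (hcomult H x))) ({..<d}\<times>{..<d}) (a,b)"
      using a b by (simp add: vsum_apply smul_apply sum_Times tens_map_def adj_bvec_coeff hcomult_def comult_coeffs_def mult_ac)
    finally show ?thesis .
  qed
qed

lemma adj_coeff_linear: assumes x: "x \<in> V" and l: "l < d"
  shows "adj_coeff l x t = (\<Sum>c<d. x c * adj_coeff l (bvec c) t)"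
proof -
  have "adj_coeff l x t = adj_coeff l (\<lambda>z. \<Sum>c<d. x c * bvec c z) t"
    by (rule adj_coeff_cong) (simp add: bvec_apply if_zero_simps)
  also have "\<dots> = (\<Sum>i<d. \<Sum>j<d. D l i j * (\<Sum>c<d. x c * al.amult (L i) (al.amult (bvec c) (R j)) t))"
    unfolding adj_coeff_def al.amult_sum_left al.amult_sum_right ..
  also have "\<dots> = (\<Sum>i<d. \<Sum>j<d. \<Sum>c<d. x c * (D l i j * al.amult (L i) (al.amult (bvec c) (R j)) t))"
    by (simp add: sum_distrib_left mult_ac)
  also have "\<dots> = (\<Sum>c<d. \<Sum>i<d. \<Sum>j<d. x c * (D l i j * al.amult (L i) (al.amult (bvec c) (R j)) t))"
    by (rule sum_rotate3)
  also have "\<dots> = (\<Sum>c<d. x c * adj_coeff l (bvec c) t)"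
    by (simp add: adj_coeff_def sum_distrib_left)
  finally show ?thesis .
qed

lemma basis_linear_adj: "l < d \<Longrightarrow> basis_linear (adj (bvec l))"
  unfolding basis_linear_def by (auto simp: fun_eq_iff adj_bvec adj_coeff_linear bvec_in_vecs)

lemma adj_expand: assumes h: "h \<in> V" shows "adj h x = vsum (\<lambda>l. smul (h l) (adj (bvec l) x)) {..<d}"
proof (rule ext)
  fix t
  have "adj h x t = (\<Sum>i<d. \<Sum>j<d. \<Sum>l<d. h l * (D l i j * hmult H (left_vec i) (hmult H x (right_vec j)) t))"
    by (simp add: adj_apply hcomult_def sum_distrib_left sum_distrib_right mult_ac)
  also have "\<dots> = (\<Sum>l<d. \<Sum>i<d. \<Sum>j<d. h l * (D l i j * hmult H (left_vec i) (hmult H x (right_vec j)) t))"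
    by (rule sum_rotate3)
  also have "\<dots> = vsum (\<lambda>l. smul (h l) (adj (bvec l) x)) {..<d} t"
    by (simp add: vsum_apply smul_apply adj_apply hcomult_bvec sum_distrib_left)
  finally show "adj h x t = vsum (\<lambda>l. smul (h l) (adj (bvec l) x)) {..<d} t" .
qed

lemma adj_add: "adj h (addv x y) = addv (adj h x) (adj h y)"
  by (simp add: fun_eq_iff adj_apply hmult_addL hmult_addR addv_apply sum.distrib algebra_simps)

lemma adj_smul: "adj h (smul c x) = smul c (adj h x)"
  by (simp add: fun_eq_iff adj_apply hmult_smulL hmult_smulR smul_apply sum_distrib_left algebra_simps)


lemma adj_scalars: "l < d \<Longrightarrow> adj (bvec l) ` scalars \<subseteq> scalars"
  unfolding scalars_def by (auto simp: adj_smul adj_unit smul_smul)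

lemma coradical_compatible_adj: "coradical_compatible {adj (bvec l) | l. l < d}"
  unfolding coradical_compatible_def
proof (intro ballI conjI)
  fix f assume "f \<in> {adj (bvec l) | l. l < d}"
  then obtain l where f: "f = adj (bvec l)" and l: "l < d" by blast
  show "basis_linear f" "f ` V \<subseteq> V" "f ` scalars \<subseteq> scalars"
    using f l basis_linear_adj adj_in_vecs adj_scalars by auto
  fix x assume "x \<in> V"
  let ?S = "kspan {tens_map g h (hcomult H x) | g h. g \<in> {adj (bvec l) | l. l < d} \<and> h \<in> {adj (bvec l) | l. l < d}}"
  have "vsum (\<lambda>(i,j). smul (D l i j) (tens_map (adj (bvec i)) (adj (bvec j)) (hcomult H x))) ({..<d}\<times>{..<d}) \<in> ?S"
  proof (rule lin_closed_vsum[OF lin_closed_kspan])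
    fix p assume "p \<in> {..<d} \<times> {..<d}"
    then obtain i j where p: "p = (i, j)" "i < d" "j < d" by blast
    then have "tens_map (adj (bvec i)) (adj (bvec j)) (hcomult H x) \<in> ?S"
      by (blast intro: kspan.kspan_base)
    then show "(\<lambda>(i, j). smul (D l i j) (tens_map (adj (bvec i)) (adj (bvec j)) (hcomult H x))) p \<in> ?S"
      unfolding p by (simp add: kspan.kspan_smul)
  qed simp
  then show "hcomult H (f x) \<in> ?S" using f l \<open>x \<in> V\<close> by (simp add: hcomult_adj)
qed

lemma adj_gen_subalg:
  assumes X: "X \<subseteq> V" "\<And>l. l < d \<Longrightarrow> adj (bvec l) ` X \<subseteq> X"
    and x: "x \<in> gen_subalg H X" and h: "h \<in> V"
  shows "adj h x \<in> gen_subalg H X"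
proof -
  have K: "lin_closed (gen_subalg H X)" "u \<in> gen_subalg H X"
    "\<And>v w. v \<in> gen_subalg H X \<Longrightarrow> w \<in> gen_subalg H X \<Longrightarrow> hmult H v w \<in> gen_subalg H X"
    using subalgebra_gen_subalg[OF X(1)] by (auto simp: subalgebra_of_iff)
  from X(1) x have "\<forall>l<d. adj (bvec l) x \<in> gen_subalg H X"
  proof (induction rule: gen_subalg_induct)
    case (base x) then show ?case using X(2) gen_subalg_subset by blast
  next
    case (mult v w)
    then show ?case
      by (auto simp: adj_hmult intro!: lin_closed_vsum[OF K(1)] lin_closed_smul[OF K(1)] K(3))
  qed (use K in \<open>simp_all add: adj_unit adj_add adj_smul lin_closed_add lin_closed_smul\<close>)
  then show ?thesis
    unfolding adj_expand[OF h] by (auto intro!: lin_closed_vsum[OF K(1)] lin_closed_smul[OF K(1)])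
qed

end

sublocale cocomm_hopf \<subseteq> adL: adjoint_pair H s bvec
  by unfold_locales (auto simp: anti_left_amult anti_right_amult delta_anti_cocomm delta_bvec)
sublocale cocomm_hopf \<subseteq> adR: adjoint_pair H bvec s
  by unfold_locales (auto simp: anti_left_amult anti_right_amult delta_anti_cocomm delta_bvec)

context cocomm_hopf
begin

lemma anti_truncated: "i < d \<Longrightarrow> (\<lambda>t. if t < d then s i t else 0) = hanti H (bvec i)"
  by (simp add: fun_eq_iff hanti_bvec)

lemma bvec_truncated: "j < d \<Longrightarrow> (\<lambda>t. if t < d then bvec j t else 0) = bvec j"
  by (auto simp: fun_eq_iff bvec_apply)

lemma adL_adj_eq: "adL.adj h x = vsum (\<lambda>(i, j). smul (hcomult H h (i, j)) (hmult H (hanti H (bvec i)) (hmult H x (bvec j)))) ({..<d} \<times> {..<d})"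
  unfolding adL.adj_def
  by (rule vsum_cong) (auto simp: adL.left_vec_def adL.right_vec_def anti_truncated bvec_truncated)

lemma adR_adj_eq: "adR.adj h x = vsum (\<lambda>(i, j). smul (hcomult H h (i, j)) (hmult H (bvec i) (hmult H x (hanti H (bvec j))))) ({..<d} \<times> {..<d})"
  unfolding adR.adj_def
  by (rule vsum_cong) (auto simp: adR.left_vec_def adR.right_vec_def anti_truncated bvec_truncated)

section \<open>Normality of the upper power series\<close>

definition normal_subcoalgebra :: "(nat \<Rightarrow> 'k) set \<Rightarrow> bool" where
  "normal_subcoalgebra X \<longleftrightarrow> subcoalgebra H X \<and> hanti H ` X \<subseteq> X
     \<and> (\<forall>l<d. adL.adj (bvec l) ` X \<subseteq> X \<and> adR.adj (bvec l) ` X \<subseteq> X)"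

lemma normal_hopf_subalgebra_gen_subalg:
  assumes "normal_subcoalgebra X"
  shows "normal_hopf_subalgebra H (gen_subalg H X)"
proof -
  have X: "X \<subseteq> V" "hcomult H ` X \<subseteq> tens_sp X X" "hanti H ` X \<subseteq> X"
    "\<And>l. l < d \<Longrightarrow> adL.adj (bvec l) ` X \<subseteq> X" "\<And>l. l < d \<Longrightarrow> adR.adj (bvec l) ` X \<subseteq> X"
    using assms by (auto simp: normal_subcoalgebra_def subcoalgebra_def subspace_of_iff)
  have "hopf_subalgebra H (gen_subalg H X)"
    unfolding hopf_subalgebra_def
    using subalgebra_gen_subalg hcomult_gen_subalg hanti_gen_subalg X(1-3) by blast
  then show ?thesis
    unfolding normal_hopf_subalgebra_def adL_adj_eq[symmetric] adR_adj_eq[symmetric]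
    using adL.adj_gen_subalg[OF X(1,4)] adR.adj_gen_subalg[OF X(1,5)] by blast
qed

lemma normal_subcoalgebra_corad_filt:
  assumes conn: "connected_hopf H"
  shows "normal_subcoalgebra (corad_filt H n)"
proof -
  have "subcoalgebra H (corad_filt H n)"
    unfolding subcoalgebra_def subspace_of_iff
    using corad_filt_subset[OF conn] lin_closed_corad_filt[OF conn] hcomult_corad_filt[OF conn] by blast
  moreover have "hanti H ` corad_filt H n \<subseteq> corad_filt H n"
    using corad_filt_stable[OF conn coradical_compatible_hanti] by simp
  moreover have "adL.adj (bvec l) ` corad_filt H n \<subseteq> corad_filt H n"
    and "adR.adj (bvec l) ` corad_filt H n \<subseteq> corad_filt H n" if "l < d" for l
    using that corad_filt_stable[OF conn adL.coradical_compatible_adj]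
      corad_filt_stable[OF conn adR.coradical_compatible_adj] by blast+
  ultimately show ?thesis by (simp add: normal_subcoalgebra_def)
qed

end

theorem corollary4p6:
  fixes H :: "'k::alg_closed_field hopf"
  assumes "CHAR('k) > 0"
    and "hopf_algebra H"
    and "cocommutative H"
    and "connected_hopf H"
  shows "\<forall>n. normal_hopf_subalgebra H (upper_power H n)"
proof
  fix n
  interpret cocomm_hopf H using assms(2,3) by unfold_locales
  show "normal_hopf_subalgebra H (upper_power H n)"
    unfolding upper_power_eq_gen_subalg[OF assms(4)]
    by (intro normal_hopf_subalgebra_gen_subalg normal_subcoalgebra_corad_filt assms(4))
qed

end
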